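(* A PFSA is irreducible if and only if it has no two distinct equivalent states. Furthermore, if two irreducible PFSA $G_1=(\Sigma,Q_1,\delta_1,\tilde\pi_1)$ and $G_2=(\Sigma,Q_2,\delta_2,\tilde\pi_2)$ generate the same stochastic process, then there is a bijection $f:Q_1\to Q_2$ such that $f(\delta_1(q,\sigma))=\delta_2(f(q),\sigma)$ and $\tilde\pi_2(f(q))=\tilde\pi_1(q)$ for all $q\in Q_1$, $\sigma\in\Sigma$.
   Context: A PFSA $G=(\Sigma,Q,\delta,\tilde\pi)$ consists of a finite alphabet $\Sigma$, a finite state set $Q$, observation probabilities $\tilde\pi(q,\cdot)$ (a probability distribution on $\Sigma$ for each $q$), and a partial transition map $\delta:Q\times\Sigma\to Q$ defined exactly where $\tilde\pi(q,\sigma)>0$; its graph (edges $q\to\delta(q,\sigma)$) is assumed strongly connected. It generates a process by emitting $\sigma$ with probability $\tilde\pi(q,\sigma)$ from current state $q$ and moving to $\delta(q,\sigma)$, the initial state drawn from the stationary distribution of the transition matrix $\pi(q,q')=\sum_{\sigma:\delta(q,\sigma)=q'}\tilde\pi(q,\sigma)$. $G$ is irreducible if no PFSA with strictly fewer states generates the same process. For a state $q$, $\mu_q$ is the probability measure on $\Sigma^\omega$ with $\mu_q(x\Sigma^\omega)=\tilde\pi(q,x)$, where for $x=\sigma_1\cdots\sigma_n$, $\tilde\pi(q,x)=\prod_{i=1}^n\tilde\pi(q_{i-1},\sigma_i)$ with $q_0=q$, $q_i=\delta(q_{i-1},\sigma_i)$ (and $0$ if some transition is undefined), i.e. the probability of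 emitting $x$ starting from $q$. Two states $q,q'$ are equivalent iff $\mu_q=\mu_{q'}$. *)

theory Defs
  imports Complex_Main
begin

text \<open>A PFSA is given by an alphabet S, a state set Q, a transition map d
  (meaningful only where the observation probability is positive) and
  observation probabilities p.\<close>

definition pfsa_edges :: "'a set \<Rightarrow> 'q set \<Rightarrow> ('q \<Rightarrow> 'a \<Rightarrow> 'q) \<Rightarrow> ('q \<Rightarrow> 'a \<Rightarrow> real) \<Rightarrow> ('q \<times> 'q) set" where
  "pfsa_edges S Q d p = {(q, d q s) | q s. q \<in> Q \<and> s \<in> S \<and> p q s > 0}"

definition pfsa :: "'a set \<Rightarrow> 'q set \<Rightarrow> ('q \<Rightarrow> 'a \<Rightarrow> 'q) \<Rightarrow> ('q \<Rightarrow> 'a \<Rightarrow> real) \<Rightarrow> bool" where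
  "pfsa S Q d p \<longleftrightarrow>
     finite S \<and> S \<noteq> {} \<and> finite Q \<and> Q \<noteq> {} \<and>
     (\<forall>q\<in>Q. (\<forall>s\<in>S. p q s \<ge> 0) \<and> (\<Sum>s\<in>S. p q s) = 1) \<and>
     (\<forall>q\<in>Q. \<forall>s\<in>S. p q s > 0 \<longrightarrow> d q s \<in> Q) \<and>
     (\<forall>q\<in>Q. \<forall>q'\<in>Q. (q, q') \<in> (pfsa_edges S Q d p)\<^sup>*)"

definition trans_prob :: "'a set \<Rightarrow> ('q \<Rightarrow> 'a \<Rightarrow> 'q) \<Rightarrow> ('q \<Rightarrow> 'a \<Rightarrow> real) \<Rightarrow> 'q \<Rightarrow> 'q \<Rightarrow> real" where
  "trans_prob S d p q q' = (\<Sum>s\<in>{s\<in>S. p q s > 0 \<and> d q s = q'}. p q s)"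

definition is_stationary :: "'a set \<Rightarrow> 'q set \<Rightarrow> ('q \<Rightarrow> 'a \<Rightarrow> 'q) \<Rightarrow> ('q \<Rightarrow> 'a \<Rightarrow> real) \<Rightarrow> ('q \<Rightarrow> real) \<Rightarrow> bool" where
  "is_stationary S Q d p v \<longleftrightarrow>
     (\<forall>q\<in>Q. v q \<ge> 0) \<and> (\<forall>q. q \<notin> Q \<longrightarrow> v q = 0) \<and> (\<Sum>q\<in>Q. v q) = 1 \<and>
     (\<forall>q'\<in>Q. (\<Sum>q\<in>Q. v q * trans_prob S d p q q') = v q')"

text \<open>The (unique, by strong connectivity) stationary distribution.\<close>
definition stationary :: "'a set \<Rightarrow> 'q set \<Rightarrow> ('q \<Rightarrow> 'a \<Rightarrow> 'q) \<Rightarrow> ('q \<Rightarrow> 'a \<Rightarrow> real) \<Rightarrow> 'q \<Rightarrow> real" where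
  "stationary S Q d p = (THE v. is_stationary S Q d p v)"

fun word_prob :: "('q \<Rightarrow> 'a \<Rightarrow> 'q) \<Rightarrow> ('q \<Rightarrow> 'a \<Rightarrow> real) \<Rightarrow> 'q \<Rightarrow> 'a list \<Rightarrow> real" where
  "word_prob d p q [] = 1"
| "word_prob d p q (s # x) = (if p q s > 0 then p q s * word_prob d p (d q s) x else 0)"

text \<open>Probability of the cylinder x Sigma^omega under the generated process.\<close>
definition process_prob :: "'a set \<Rightarrow> 'q set \<Rightarrow> ('q \<Rightarrow> 'a \<Rightarrow> 'q) \<Rightarrow> ('q \<Rightarrow> 'a \<Rightarrow> real) \<Rightarrow> 'a list \<Rightarrow> real" where
  "process_prob S Q d p x = (\<Sum>q\<in>Q. stationary S Q d p q * word_prob d p q x)"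

text \<open>Two PFSA over the same alphabet generate the same process iff the
  generated measures on Sigma^omega agree on all cylinders (which determine them).\<close>
definition same_process ::
  "'a set \<Rightarrow> 'q set \<Rightarrow> ('q \<Rightarrow> 'a \<Rightarrow> 'q) \<Rightarrow> ('q \<Rightarrow> 'a \<Rightarrow> real) \<Rightarrow>
   'r set \<Rightarrow> ('r \<Rightarrow> 'a \<Rightarrow> 'r) \<Rightarrow> ('r \<Rightarrow> 'a \<Rightarrow> real) \<Rightarrow> bool" where
  "same_process S Q1 d1 p1 Q2 d2 p2 \<longleftrightarrow>
     (\<forall>x\<in>lists S. process_prob S Q1 d1 p1 x = process_prob S Q2 d2 p2 x)"

text \<open>Since only the cardinality of the state set
  matters, competing PFSA are taken w.l.o.g. with states in nat.\<close>
definition irreducible_pfsa :: "'a set \<Rightarrow> 'q set \<Rightarrow> ('q \<Rightarrow> 'a \<Rightarrow> 'q) \<Rightarrow> ('q \<Rightarrow> 'a \<Rightarrow> real) \<Rightarrow> bool" where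
  "irreducible_pfsa S Q d p \<longleftrightarrow>
     \<not> (\<exists>(Q' :: nat set) d' p'. pfsa S Q' d' p' \<and> card Q' < card Q \<and>
            same_process S Q d p Q' d' p')"

text \<open>mu_q = mu_q' iff they agree on all cylinders.\<close>
definition equiv_states :: "'a set \<Rightarrow> ('q \<Rightarrow> 'a \<Rightarrow> 'q) \<Rightarrow> ('q \<Rightarrow> 'a \<Rightarrow> real) \<Rightarrow> 'q \<Rightarrow> 'q \<Rightarrow> bool" where
  "equiv_states S d p q q' \<longleftrightarrow> (\<forall>x\<in>lists S. word_prob d p q x = word_prob d p q' x)"

end

theory Submission
  imports Defs "Jordan_Normal_Form.Determinant"
begin

text \<open>
  Merging equivalent states gives a PFSA with fewer states generating the same process: the
  quotient map is a homomorphism, and it maps the stationary distribution to a stationary,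
  hence to the (unique) stationary distribution of the quotient.

  Conversely, if two PFSA generate the same process, every state of one is equivalent to a
  state of the other. Since equivalent states have equivalent successors and the graphs are
  strongly connected, one such pair suffices. To find it, consider the posterior distribution
  of the initial state after the first \<open>n\<close> observed letters. Its expected squared norm is
  nondecreasing in \<open>n\<close> and bounded by 1, so after some word \<open>x\<close> the gain over \<open>L\<close> further
  letters is arbitrarily small. A small gain forces all initial states of non-negligible
  posterior weight to reach states with the same future after \<open>x\<close>. Then the conditional future
  after \<open>x\<close> is close to the future of one state \<open>r\<close>, and likewise of one state \<open>r'\<close> of the
  other PFSA. Both conditional futures coincide, so \<open>r\<close> and \<open>r'\<close> cannot be separated by a
  uniform gap.

  Hence a PFSA without distinct equivalent states injects into every PFSA generating the same
  process, so it is irreducible. For two irreducible PFSA this injection is a bijection that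
  preserves observation probabilities and transitions.
\<close>

lemma pfsaD:
  assumes "pfsa S Q d p"
  shows "finite S" "S \<noteq> {}" "finite Q" "Q \<noteq> {}"
    "\<And>q s. q \<in> Q \<Longrightarrow> s \<in> S \<Longrightarrow> p q s \<ge> 0"
    "\<And>q. q \<in> Q \<Longrightarrow> (\<Sum>s\<in>S. p q s) = 1"
    "\<And>q s. q \<in> Q \<Longrightarrow> s \<in> S \<Longrightarrow> p q s > 0 \<Longrightarrow> d q s \<in> Q"
    "\<And>q q'. q \<in> Q \<Longrightarrow> q' \<in> Q \<Longrightarrow> (q, q') \<in> (pfsa_edges S Q d p)\<^sup>*"
  using assms unfolding pfsa_def by auto

lemma pfsa_edgesE:
  assumes "(q, q') \<in> pfsa_edges S Q d p"
  obtains s where "q \<in> Q" "s \<in> S" "p q s > 0" "q' = d q s"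
  using assms unfolding pfsa_edges_def by auto

section \<open>The stationary distribution\<close>

lemma trans_prob_nonneg: "trans_prob S d p q q' \<ge> 0"
  unfolding trans_prob_def by (rule sum_nonneg) auto

lemma trans_prob_row_sum:
  assumes G: "pfsa S Q d p" and q: "q \<in> Q"
  shows "(\<Sum>q'\<in>Q. trans_prob S d p q q') = 1"
proof -
  have "(\<Sum>q'\<in>Q. trans_prob S d p q q') = (\<Sum>q'\<in>Q. sum (p q) {s \<in> {s\<in>S. p q s > 0}. d q s = q'})"
    unfolding trans_prob_def by (intro sum.cong) auto
  also have "\<dots> = sum (p q) {s\<in>S. p q s > 0}"
    by (rule sum.group) (use pfsaD[OF G] q in auto)
  also have "\<dots> = sum (p q) S"
    by (rule sum.mono_neutral_left) (use pfsaD[OF G] q in force)+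
  finally show ?thesis using pfsaD(6)[OF G q] by simp
qed

lemma trans_prob_ge:
  assumes "finite S" "s \<in> S" "p q s > 0"
  shows "p q s \<le> trans_prob S d p q (d q s)"
  unfolding trans_prob_def by (rule member_le_sum) (use assms in auto)

lemma stochastic_matrix_left_fixed_vector_nat:
  fixes T :: "nat \<Rightarrow> nat \<Rightarrow> real"
  assumes n: "n > 0" and rows: "\<And>i. i < n \<Longrightarrow> (\<Sum>j = 0..<n. T i j) = 1"
  shows "\<exists>u. (\<exists>i<n. u i \<noteq> 0) \<and> (\<forall>j<n. (\<Sum>i = 0..<n. u i * T i j) = u j)"
proof -
  define B :: "real mat" where "B = mat n n (\<lambda>(i, j). T i j - (if i = j then 1 else 0))"
  have B: "B \<in> carrier_mat n n" unfolding B_def by simp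
  define one :: "real vec" where "one = vec n (\<lambda>_. 1)"
  have "B *\<^sub>v one = 0\<^sub>v n"
  proof (rule eq_vecI)
    fix i assume "i < dim_vec (0\<^sub>v n :: real vec)"
    then have i: "i < n" by simp
    have "(B *\<^sub>v one) $ i = (\<Sum>j = 0..<n. T i j) - (\<Sum>j = 0..<n. if i = j then 1 else 0)"
      using i by (simp add: B_def one_def scalar_prod_def sum_subtractf)
    then show "(B *\<^sub>v one) $ i = 0\<^sub>v n $ i" using i rows by simp
  qed (simp add: B_def)
  moreover have "one \<in> carrier_vec n" "one \<noteq> 0\<^sub>v n"
    using n by (auto simp: one_def dest: arg_cong[where f = "\<lambda>v. v $ 0"])
  ultimately have "det B = 0"
    using det_0_iff_vec_prod_zero[OF B] by blast
  then have "det (transpose_mat B) = 0" by (simp add: det_transpose[OF B])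
  then obtain u where u: "u \<in> carrier_vec n" "u \<noteq> 0\<^sub>v n" "transpose_mat B *\<^sub>v u = 0\<^sub>v n"
    using det_0_iff_vec_prod_zero[of "transpose_mat B" n] B by auto
  show ?thesis
  proof (intro exI[of _ "\<lambda>i. u $ i"] conjI allI impI)
    show "\<exists>i<n. u $ i \<noteq> 0"
    proof (rule ccontr)
      assume "\<not> (\<exists>i<n. u $ i \<noteq> 0)"
      then have "u = 0\<^sub>v n" using u(1) by (intro eq_vecI) auto
      then show False using u(2) by simp
    qed
  next
    fix j assume j: "j < n"
    have "0 = (transpose_mat B *\<^sub>v u) $ j" using u(3) j by simp
    also have "\<dots> = (\<Sum>i = 0..<n. u $ i * T i j - (if i = j then u $ i else 0))"
      using j u(1) by (simp add: B_def scalar_prod_def algebra_simps if_distrib[of "(*) _"] cong: if_cong)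
    also have "\<dots> = (\<Sum>i = 0..<n. u $ i * T i j) - u $ j"
      using j by (simp add: sum_subtractf)
    finally show "(\<Sum>i = 0..<n. u $ i * T i j) = u $ j" using j by simp
  qed
qed

lemma stochastic_matrix_left_fixed_vector:
  fixes T :: "'q \<Rightarrow> 'q \<Rightarrow> real"
  assumes "finite Q" "Q \<noteq> {}" and rows: "\<And>q. q \<in> Q \<Longrightarrow> (\<Sum>q'\<in>Q. T q q') = 1"
  shows "\<exists>u. (\<exists>q\<in>Q. u q \<noteq> 0) \<and> (\<forall>q'\<in>Q. (\<Sum>q\<in>Q. u q * T q q') = u q')"
proof -
  let ?n = "card Q"
  obtain e where e: "bij_betw e {0..<?n} Q" using ex_bij_betw_nat_finite[OF assms(1)] by blast
  have reindex: "(\<Sum>i = 0..<?n. f (e i)) = (\<Sum>q\<in>Q. f q)" for f :: "'q \<Rightarrow> real"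
    using sum.reindex_bij_betw[OF e] .
  have eQ: "e i \<in> Q" if "i < ?n" for i using e that by (auto dest: bij_betwE)
  obtain u where u: "\<exists>i<?n. u i \<noteq> 0" "\<forall>j<?n. (\<Sum>i = 0..<?n. u i * T (e i) (e j)) = u j"
    using stochastic_matrix_left_fixed_vector_nat[of ?n "\<lambda>i j. T (e i) (e j)"] assms rows eQ
    by (auto simp: reindex card_gt_0_iff)
  define e' where "e' = the_inv_into {0..<?n} e"
  have e'e: "e' (e i) = i" if "i < ?n" for i
    using e that unfolding e'_def by (simp add: bij_betw_def the_inv_into_f_f)
  have ee': "e (e' q) = q" "e' q < ?n" if "q \<in> Q" for q
    using e that bij_betwE[OF bij_betw_the_inv_into[OF e]] unfolding e'_def
    by (auto simp: bij_betw_def f_the_inv_into_f)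
  show ?thesis
  proof (intro exI[of _ "u \<circ> e'"] conjI ballI)
    show "\<exists>q\<in>Q. (u \<circ> e') q \<noteq> 0" using u(1) eQ e'e by force
  next
    fix q' assume q': "q' \<in> Q"
    have "(\<Sum>q\<in>Q. (u \<circ> e') q * T q q') = (\<Sum>i = 0..<?n. u i * T (e i) (e (e' q')))"
      using ee'[OF q'] by (simp add: reindex[symmetric] e'e)
    also have "\<dots> = u (e' q')" using u(2) ee'(2)[OF q'] by blast
    finally show "(\<Sum>q\<in>Q. (u \<circ> e') q * T q q') = (u \<circ> e') q'" by simp
  qed
qed

text \<open>The absolute values of a fixed vector form a subinvariant vector of the same total mass,
  hence an invariant one.\<close>

lemma stochastic_matrix_invariant_distribution:
  fixes T :: "'q \<Rightarrow> 'q \<Rightarrow> real"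
  assumes fin: "finite Q" and ne: "Q \<noteq> {}" and nonneg: "\<And>q q'. 0 \<le> T q q'"
    and rows: "\<And>q. q \<in> Q \<Longrightarrow> (\<Sum>q'\<in>Q. T q q') = 1"
  shows "\<exists>v. (\<forall>q\<in>Q. 0 \<le> v q) \<and> (\<Sum>q\<in>Q. v q) = 1 \<and> (\<forall>q'\<in>Q. (\<Sum>q\<in>Q. v q * T q q') = v q')"
proof -
  obtain u where u0: "\<exists>q\<in>Q. u q \<noteq> 0" and u: "\<forall>q'\<in>Q. (\<Sum>q\<in>Q. u q * T q q') = u q'"
    using stochastic_matrix_left_fixed_vector[of Q T] fin ne rows by blast
  define y where "y q = \<bar>u q\<bar>" for q
  have sub: "y q' \<le> (\<Sum>q\<in>Q. y q * T q q')" if "q' \<in> Q" for q'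
  proof -
    have "y q' = \<bar>\<Sum>q\<in>Q. u q * T q q'\<bar>" using u that unfolding y_def by simp
    also have "\<dots> \<le> (\<Sum>q\<in>Q. y q * T q q')"
      using sum_abs[of "\<lambda>q. u q * T q q'" Q] by (simp add: y_def abs_mult nonneg)
    finally show ?thesis .
  qed
  have "(\<Sum>q'\<in>Q. \<Sum>q\<in>Q. y q * T q q') = (\<Sum>q\<in>Q. y q * (\<Sum>q'\<in>Q. T q q'))"
    by (subst sum.swap) (simp add: sum_distrib_left)
  also have "\<dots> = (\<Sum>q'\<in>Q. y q')" using rows by simp
  finally have total: "(\<Sum>q'\<in>Q. \<Sum>q\<in>Q. y q * T q q') = (\<Sum>q'\<in>Q. y q')" .
  have inv: "\<forall>q'\<in>Q. (\<Sum>q\<in>Q. y q * T q q') = y q'"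
  proof (rule ccontr)
    assume "\<not> ?thesis"
    then have "\<exists>q'\<in>Q. y q' < (\<Sum>q\<in>Q. y q * T q q')" using sub by force
    then have "(\<Sum>q'\<in>Q. y q') < (\<Sum>q'\<in>Q. \<Sum>q\<in>Q. y q * T q q')"
      using sub by (intro sum_strict_mono_ex1[OF fin]) auto
    then show False using total by simp
  qed
  define Y where "Y = (\<Sum>q\<in>Q. y q)"
  have "Y > 0"
    using u0 fin unfolding Y_def y_def by (auto intro: sum_pos2)
  show ?thesis
  proof (intro exI[of _ "\<lambda>q. y q / Y"] conjI ballI)
    show "(\<Sum>q\<in>Q. y q / Y) = 1" using \<open>Y > 0\<close> by (simp add: Y_def sum_divide_distrib[symmetric])
    fix q' assume "q' \<in> Q"
    then show "(\<Sum>q\<in>Q. y q / Y * T q q') = y q' / Y"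
      using inv by (simp add: sum_divide_distrib[symmetric])
  qed (use \<open>Y > 0\<close> y_def in simp)
qed

lemma invariant_vanishes_everywhere:
  assumes G: "pfsa S Q d p"
    and nonneg: "\<forall>q\<in>Q. z q \<ge> 0"
    and inv: "\<forall>q'\<in>Q. (\<Sum>q\<in>Q. z q * trans_prob S d p q q') = z q'"
    and q0: "q0 \<in> Q" "z q0 = 0" and q: "q \<in> Q"
  shows "z q = 0"
  using pfsaD(8)[OF G q q0(1)]
proof (induction rule: converse_rtrancl_induct)
  case base
  then show ?case using q0 by simp
next
  case (step y y')
  from step.hyps(1) obtain s where y: "y \<in> Q" "s \<in> S" "p y s > 0" "y' = d y s"
    by (rule pfsa_edgesE)
  have y': "y' \<in> Q" using pfsaD(7)[OF G y(1-3)] y(4) by simp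
  have terms_nonneg: "0 \<le> z x * trans_prob S d p x y'" if "x \<in> Q" for x
    using nonneg that by (intro mult_nonneg_nonneg trans_prob_nonneg) auto
  have "(\<Sum>x\<in>Q. z x * trans_prob S d p x y') = 0"
    using inv y' step.IH by simp
  then have "z y * trans_prob S d p y y' = 0"
    using sum_nonneg_eq_0_iff[OF pfsaD(3)[OF G] terms_nonneg] y(1) by simp
  moreover have "trans_prob S d p y y' > 0"
    using trans_prob_ge[where d = d and p = p and q = y, OF pfsaD(1)[OF G] y(2,3)] y(3,4) by simp
  ultimately show ?case by simp
qed

lemma is_stationary_pos:
  assumes G: "pfsa S Q d p" and v: "is_stationary S Q d p v" and q: "q \<in> Q"
  shows "v q > 0"
proof (rule ccontr)
  assume "\<not> v q > 0"
  moreover have "v q \<ge> 0" using v q unfolding is_stationary_def by blast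
  ultimately have "v q = 0" by linarith
  have "v q' = 0" if "q' \<in> Q" for q'
    using invariant_vanishes_everywhere[where z = v, OF G _ _ q \<open>v q = 0\<close> that] v
    unfolding is_stationary_def by blast
  then show False using v unfolding is_stationary_def by simp
qed

text \<open>Subtracting the largest multiple of \<open>w\<close> that stays below \<open>v\<close> leaves a nonnegative
  invariant vector that vanishes somewhere, hence everywhere.\<close>

lemma is_stationary_unique:
  assumes G: "pfsa S Q d p" and v: "is_stationary S Q d p v" and w: "is_stationary S Q d p w"
  shows "v = w"
proof -
  have fin: "finite Q" and ne: "Q \<noteq> {}" using pfsaD[OF G] by auto
  have w_pos: "\<And>q. q \<in> Q \<Longrightarrow> w q > 0" using is_stationary_pos[OF G w] .
  define t where "t = Min ((\<lambda>q. v q / w q) ` Q)"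
  obtain qm where qm: "qm \<in> Q" "t = v qm / w qm"
    using Min_in[of "(\<lambda>q. v q / w q) ` Q"] fin ne unfolding t_def by blast
  define z where "z q = v q - t * w q" for q
  have z_nonneg: "\<forall>q\<in>Q. z q \<ge> 0"
  proof
    fix q assume q: "q \<in> Q"
    have "t \<le> v q / w q" unfolding t_def using fin q by simp
    then show "z q \<ge> 0" using w_pos[OF q] unfolding z_def by (simp add: pos_le_divide_eq)
  qed
  have z_inv: "\<forall>q'\<in>Q. (\<Sum>q\<in>Q. z q * trans_prob S d p q q') = z q'"
  proof
    fix q' assume q': "q' \<in> Q"
    have "(\<Sum>q\<in>Q. z q * trans_prob S d p q q') =
        (\<Sum>q\<in>Q. v q * trans_prob S d p q q') - t * (\<Sum>q\<in>Q. w q * trans_prob S d p q q')"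
      unfolding z_def by (simp add: left_diff_distrib sum_subtractf sum_distrib_left mult.assoc)
    then show "(\<Sum>q\<in>Q. z q * trans_prob S d p q q') = z q'"
      using v w q' unfolding is_stationary_def z_def by simp
  qed
  have "z qm = 0" using qm w_pos[OF qm(1)] unfolding z_def by simp
  then have v_eq: "v q = t * w q" if "q \<in> Q" for q
    using invariant_vanishes_everywhere[where z = z, OF G z_nonneg z_inv qm(1) _ that] unfolding z_def by simp
  have "1 = t * (\<Sum>q\<in>Q. w q)"
    using v v_eq unfolding is_stationary_def by (simp add: sum_distrib_left)
  then have "t = 1" using w unfolding is_stationary_def by simp
  show ?thesis
  proof
    fix q
    show "v q = w q"
      using v_eq[of q] \<open>t = 1\<close> v w unfolding is_stationary_def by (cases "q \<in> Q") auto
  qed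
qed

lemma is_stationary_exists:
  assumes G: "pfsa S Q d p"
  shows "\<exists>v. is_stationary S Q d p v"
proof -
  obtain v where v: "\<forall>q\<in>Q. 0 \<le> v q" "(\<Sum>q\<in>Q. v q) = 1"
    "\<forall>q'\<in>Q. (\<Sum>q\<in>Q. v q * trans_prob S d p q q') = v q'"
    using stochastic_matrix_invariant_distribution[of Q "trans_prob S d p", OF pfsaD(3,4)[OF G]
        trans_prob_nonneg trans_prob_row_sum[OF G]]
    by blast
  then have "is_stationary S Q d p (\<lambda>q. if q \<in> Q then v q else 0)"
    unfolding is_stationary_def by (simp cong: sum.cong)
  then show ?thesis by blast
qed

lemma is_stationary_stationary:
  assumes G: "pfsa S Q d p"
  shows "is_stationary S Q d p (stationary S Q d p)"
proof -
  obtain v where v: "is_stationary S Q d p v" using is_stationary_exists[OF G] ..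
  show ?thesis
    unfolding stationary_def
    by (rule theI[where P = "is_stationary S Q d p", OF v]) (rule is_stationary_unique[OF G _ v])
qed

lemma stationary_eqI:
  assumes G: "pfsa S Q d p" and "is_stationary S Q d p v"
  shows "stationary S Q d p = v"
  using is_stationary_unique[OF G is_stationary_stationary[OF G] assms(2)] .

section \<open>Word probabilities\<close>

definition words :: "'a set \<Rightarrow> nat \<Rightarrow> 'a list set" where
  "words S n = {w \<in> lists S. length w = n}"

lemma finite_words:
  assumes "finite S" shows "finite (words S n)"
proof -
  have "words S n = {xs. set xs \<subseteq> S \<and> length xs = n}" unfolding words_def by auto
  then show ?thesis using finite_lists_length_eq[OF assms, of n] by simp
qed

lemma words_0: "words S 0 = {[]}"
  unfolding words_def by auto

lemma words_1: "words S 1 = (\<lambda>s. [s]) ` S"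
  unfolding words_def by (auto simp: length_Suc_conv)

lemma sum_words_add:
  "(\<Sum>z\<in>words S (n + L). f z) = (\<Sum>x\<in>words S n. \<Sum>w\<in>words S L. f (x @ w))"
proof -
  have inj: "inj_on (\<lambda>(x, w). x @ w) (words S n \<times> words S L)"
    unfolding words_def by (auto simp: inj_on_def)
  have "(\<lambda>(x, w). x @ w) ` (words S n \<times> words S L) = words S (n + L)"
  proof
    show "(\<lambda>(x, w). x @ w) ` (words S n \<times> words S L) \<subseteq> words S (n + L)"
      unfolding words_def by auto
    show "words S (n + L) \<subseteq> (\<lambda>(x, w). x @ w) ` (words S n \<times> words S L)"
    proof
      fix z assume z: "z \<in> words S (n + L)"
      then have "(take n z, drop n z) \<in> words S n \<times> words S L"
        unfolding words_def by (auto dest: in_set_takeD in_set_dropD)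
      then show "z \<in> (\<lambda>(x, w). x @ w) ` (words S n \<times> words S L)"
        by (metis (no_types, lifting) append_take_drop_id case_prod_conv image_eqI)
    qed
  qed
  then have "(\<Sum>z\<in>words S (n + L). f z) = (\<Sum>(x, w)\<in>words S n \<times> words S L. f (x @ w))"
    using sum.reindex[OF inj, of f] by (simp add: case_prod_beta')
  then show ?thesis by (simp add: sum.cartesian_product)
qed

lemma word_prob_append:
  "word_prob d p q (x @ w) = word_prob d p q x * word_prob d p (foldl d q x) w"
  by (induction x arbitrary: q) auto

lemma word_prob_nonneg: "word_prob d p q x \<ge> 0"
  by (induction x arbitrary: q) auto

lemma word_prob_single:
  assumes G: "pfsa S Q d p" and "q \<in> Q" "s \<in> S"
  shows "word_prob d p q [s] = p q s"
  using pfsaD(5)[OF assms] by auto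

lemma foldl_in_states:
  assumes G: "pfsa S Q d p"
  shows "q \<in> Q \<Longrightarrow> x \<in> lists S \<Longrightarrow> word_prob d p q x > 0 \<Longrightarrow> foldl d q x \<in> Q"
proof (induction x arbitrary: q)
  case (Cons s x)
  then have "p q s > 0" by (auto split: if_splits)
  with Cons show ?case
    using pfsaD(7)[OF G] by (auto simp: zero_less_mult_iff)
qed simp

lemma sum_word_prob_words:
  assumes G: "pfsa S Q d p" and q: "q \<in> Q"
  shows "(\<Sum>w\<in>words S L. word_prob d p q w) = 1"
proof (induction L)
  case 0
  then show ?case by (simp add: words_0)
next
  case (Suc L)
  have extend: "(\<Sum>w\<in>words S 1. word_prob d p q (x @ w)) = word_prob d p q x"
    if x: "x \<in> words S L" for x
  proof (cases "word_prob d p q x > 0")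
    case True
    then have r: "foldl d q x \<in> Q"
      using foldl_in_states[OF G q] x unfolding words_def by auto
    have "(\<Sum>w\<in>words S 1. word_prob d p q (x @ w)) =
        word_prob d p q x * (\<Sum>s\<in>S. word_prob d p (foldl d q x) [s])"
      unfolding words_1 word_prob_append
      by (subst sum.reindex) (auto simp: inj_on_def sum_distrib_left)
    also have "(\<Sum>s\<in>S. word_prob d p (foldl d q x) [s]) = 1"
      using word_prob_single[OF G r] pfsaD(6)[OF G r] by simp
    finally show ?thesis by simp
  next
    case False
    then have "word_prob d p q x = 0" using word_prob_nonneg[of d p q x] by simp
    then show ?thesis by (simp add: word_prob_append)
  qed
  have "(\<Sum>w\<in>words S (L + 1). word_prob d p q w) =
      (\<Sum>x\<in>words S L. \<Sum>w\<in>words S 1. word_prob d p q (x @ w))"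
    by (rule sum_words_add)
  also have "\<dots> = (\<Sum>x\<in>words S L. word_prob d p q x)"
    using extend by simp
  finally show ?case using Suc by simp
qed

lemma sum_word_prob_extensions:
  assumes G: "pfsa S Q d p" and q: "q \<in> Q" and x: "x \<in> lists S"
  shows "(\<Sum>w\<in>words S L. word_prob d p q (x @ w)) = word_prob d p q x"
proof (cases "word_prob d p q x > 0")
  case True
  then have "foldl d q x \<in> Q" using foldl_in_states[OF G q x] by simp
  then show ?thesis
    by (simp add: word_prob_append sum_distrib_left[symmetric] sum_word_prob_words[OF G])
next
  case False
  then have "word_prob d p q x = 0" using word_prob_nonneg[of d p q x] by simp
  then show ?thesis by (simp add: word_prob_append)
qed

lemma word_prob_le_1:
  assumes G: "pfsa S Q d p" and q: "q \<in> Q" and x: "x \<in> lists S"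
  shows "word_prob d p q x \<le> 1"
proof -
  have "word_prob d p q x \<le> (\<Sum>w\<in>words S (length x). word_prob d p q w)"
    using x finite_words[OF pfsaD(1)[OF G]]
    by (intro member_le_sum) (auto simp: words_def word_prob_nonneg)
  then show ?thesis using sum_word_prob_words[OF G q] by simp
qed

section \<open>Equivalent states and homomorphic images\<close>

definition future_equiv ::
  "'a set \<Rightarrow> ('q \<Rightarrow> 'a \<Rightarrow> 'q) \<Rightarrow> ('q \<Rightarrow> 'a \<Rightarrow> real) \<Rightarrow> 'q \<Rightarrow>
   ('r \<Rightarrow> 'a \<Rightarrow> 'r) \<Rightarrow> ('r \<Rightarrow> 'a \<Rightarrow> real) \<Rightarrow> 'r \<Rightarrow> bool" where
  "future_equiv S d p q d' p' q' \<longleftrightarrow> (\<forall>x\<in>lists S. word_prob d p q x = word_prob d' p' q' x)"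

lemma equiv_states_iff_future_equiv: "equiv_states S d p q q' \<longleftrightarrow> future_equiv S d p q d p q'"
  unfolding equiv_states_def future_equiv_def ..

lemma future_equiv_step:
  assumes eq: "future_equiv S d p q d' p' q'" and s: "s \<in> S" and pos: "p q s > 0"
  shows "p' q' s = p q s" and "future_equiv S d p (d q s) d' p' (d' q' s)"
proof -
  have "[s] \<in> lists S" using s by simp
  then have "word_prob d p q [s] = word_prob d' p' q' [s]" using eq unfolding future_equiv_def by blast
  with pos show p_eq: "p' q' s = p q s" by (simp split: if_splits)
  show "future_equiv S d p (d q s) d' p' (d' q' s)"
    unfolding future_equiv_def
  proof
    fix w assume "w \<in> lists S"
    then have "s # w \<in> lists S" using s by simp
    then have "word_prob d p q (s # w) = word_prob d' p' q' (s # w)"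
      using eq unfolding future_equiv_def by blast
    then show "word_prob d p (d q s) w = word_prob d' p' (d' q' s) w" using pos p_eq by simp
  qed
qed

lemma future_equiv_letter_prob:
  assumes "pfsa S Q d p" "pfsa S Q' d' p'" "q \<in> Q" "q' \<in> Q'"
    and "future_equiv S d p q d' p' q'" "s \<in> S"
  shows "p' q' s = p q s"
proof -
  have "[s] \<in> lists S" using assms(6) by simp
  then have "word_prob d p q [s] = word_prob d' p' q' [s]" using assms(5) unfolding future_equiv_def by blast
  then show ?thesis by (simp only: word_prob_single[OF assms(1,3,6)] word_prob_single[OF assms(2,4,6)])
qed

definition pfsa_hom ::
  "'a set \<Rightarrow> 'q set \<Rightarrow> ('q \<Rightarrow> 'a \<Rightarrow> 'q) \<Rightarrow> ('q \<Rightarrow> 'a \<Rightarrow> real) \<Rightarrow>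
   ('r \<Rightarrow> 'a \<Rightarrow> 'r) \<Rightarrow> ('r \<Rightarrow> 'a \<Rightarrow> real) \<Rightarrow> ('q \<Rightarrow> 'r) \<Rightarrow> bool" where
  "pfsa_hom S Q d p d' p' h \<longleftrightarrow>
     (\<forall>q\<in>Q. \<forall>s\<in>S. p' (h q) s = p q s \<and> (p q s > 0 \<longrightarrow> h (d q s) = d' (h q) s))"

lemma pfsa_hom_future_equiv:
  assumes G: "pfsa S Q d p" and h: "pfsa_hom S Q d p d' p' h" and q: "q \<in> Q"
  shows "future_equiv S d p q d' p' (h q)"
  unfolding future_equiv_def
proof
  fix x assume "x \<in> lists S"
  then show "word_prob d p q x = word_prob d' p' (h q) x"
    using q
  proof (induction x arbitrary: q)
    case (Cons s x)
    then show ?case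
      using h pfsaD(7)[OF G] unfolding pfsa_hom_def by auto
  qed simp
qed

lemma pfsa_hom_image:
  assumes G: "pfsa S Q d p" and h: "pfsa_hom S Q d p d' p' h"
  shows "pfsa S (h ` Q) d' p'"
  unfolding pfsa_def
proof (intro conjI ballI impI)
  show "finite S" "S \<noteq> {}" "finite (h ` Q)" "h ` Q \<noteq> {}" using pfsaD[OF G] by auto
next
  fix i s assume "i \<in> h ` Q" "s \<in> S"
  then show "0 \<le> p' i s" using h pfsaD(5)[OF G] unfolding pfsa_hom_def by auto
next
  fix i assume "i \<in> h ` Q"
  then show "(\<Sum>s\<in>S. p' i s) = 1" using h pfsaD(6)[OF G] unfolding pfsa_hom_def by auto
next
  fix i s assume "i \<in> h ` Q" "s \<in> S" "0 < p' i s"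
  then show "d' i s \<in> h ` Q" using h pfsaD(7)[OF G] unfolding pfsa_hom_def by force
next
  fix i j assume "i \<in> h ` Q" "j \<in> h ` Q"
  then obtain a b where a: "a \<in> Q" "i = h a" and b: "b \<in> Q" "j = h b" by auto
  have "(h a, h b) \<in> (pfsa_edges S (h ` Q) d' p')\<^sup>*"
    using pfsaD(8)[OF G a(1) b(1)]
  proof (induction rule: rtrancl_induct)
    case (step y z)
    from step.hyps(2) obtain s where "y \<in> Q" "s \<in> S" "p y s > 0" "z = d y s"
      by (rule pfsa_edgesE)
    then have "(h y, h z) \<in> pfsa_edges S (h ` Q) d' p'"
      using h unfolding pfsa_hom_def pfsa_edges_def by force
    then show ?case using step.IH by simp
  qed simp
  then show "(i, j) \<in> (pfsa_edges S (h ` Q) d' p')\<^sup>*" using a b by simp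
qed

lemma trans_prob_hom_image:
  assumes G: "pfsa S Q d p" and h: "pfsa_hom S Q d p d' p' h" and q: "q \<in> Q"
  shows "trans_prob S d' p' (h q) r = (\<Sum>q'\<in>{q'\<in>Q. h q' = r}. trans_prob S d p q q')"
proof -
  define A where "A = {s\<in>S. p q s > 0 \<and> h (d q s) = r}"
  have "trans_prob S d' p' (h q) r = (\<Sum>s\<in>A. p q s)"
    unfolding trans_prob_def A_def using h q unfolding pfsa_hom_def by (intro sum.cong) auto
  also have "\<dots> = (\<Sum>q'\<in>{q'\<in>Q. h q' = r}. \<Sum>s\<in>{s\<in>A. d q s = q'}. p q s)"
    by (rule sum.group[symmetric]) (use pfsaD[OF G] q in \<open>auto simp: A_def\<close>)
  also have "\<dots> = (\<Sum>q'\<in>{q'\<in>Q. h q' = r}. trans_prob S d p q q')"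
    unfolding trans_prob_def A_def by (intro sum.cong) auto
  finally show ?thesis .
qed

lemma is_stationary_hom_image:
  assumes G: "pfsa S Q d p" and h: "pfsa_hom S Q d p d' p' h" and v: "is_stationary S Q d p v"
  shows "is_stationary S (h ` Q) d' p' (\<lambda>r. \<Sum>q\<in>{q\<in>Q. h q = r}. v q)"
proof -
  have fin: "finite Q" using pfsaD(3)[OF G] .
  have group: "(\<Sum>r\<in>h ` Q. \<Sum>q\<in>{q\<in>Q. h q = r}. f q) = (\<Sum>q\<in>Q. f q)" for f :: "_ \<Rightarrow> real"
    by (rule sum.group) (use fin in auto)
  show ?thesis
    unfolding is_stationary_def
  proof (intro conjI ballI allI impI)
    fix r assume "r \<in> h ` Q"
    then show "0 \<le> (\<Sum>q\<in>{q\<in>Q. h q = r}. v q)"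
      using v unfolding is_stationary_def by (intro sum_nonneg) auto
  next
    fix r assume "r \<notin> h ` Q"
    then have "{q\<in>Q. h q = r} = {}" by auto
    then show "(\<Sum>q\<in>{q\<in>Q. h q = r}. v q) = 0" by (simp only: sum.empty)
  next
    show "(\<Sum>r\<in>h ` Q. \<Sum>q\<in>{q\<in>Q. h q = r}. v q) = 1"
      unfolding group using v unfolding is_stationary_def by simp
  next
    fix r' assume r': "r' \<in> h ` Q"
    have "(\<Sum>r\<in>h ` Q. (\<Sum>q\<in>{q\<in>Q. h q = r}. v q) * trans_prob S d' p' r r')
        = (\<Sum>r\<in>h ` Q. \<Sum>q\<in>{q\<in>Q. h q = r}. v q * trans_prob S d' p' (h q) r')"
      by (intro sum.cong refl) (auto simp: sum_distrib_right)
    also have "\<dots> = (\<Sum>q\<in>Q. \<Sum>q'\<in>{q'\<in>Q. h q' = r'}. v q * trans_prob S d p q q')"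
      unfolding group
      by (intro sum.cong refl) (simp add: trans_prob_hom_image[OF G h] sum_distrib_left)
    also have "\<dots> = (\<Sum>q'\<in>{q'\<in>Q. h q' = r'}. \<Sum>q\<in>Q. v q * trans_prob S d p q q')"
      by (rule sum.swap)
    also have "\<dots> = (\<Sum>q'\<in>{q'\<in>Q. h q' = r'}. v q')"
      using v unfolding is_stationary_def by (intro sum.cong) auto
    finally show "(\<Sum>r\<in>h ` Q. (\<Sum>q\<in>{q\<in>Q. h q = r}. v q) * trans_prob S d' p' r r')
        = (\<Sum>q\<in>{q\<in>Q. h q = r'}. v q)" .
  qed
qed

lemma same_process_hom_image:
  assumes G: "pfsa S Q d p" and h: "pfsa_hom S Q d p d' p' h"
  shows "same_process S Q d p (h ` Q) d' p'"
  unfolding same_process_def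
proof
  fix x assume x: "x \<in> lists S"
  let ?v = "stationary S Q d p"
  have "stationary S (h ` Q) d' p' = (\<lambda>r. \<Sum>q\<in>{q\<in>Q. h q = r}. ?v q)"
    using stationary_eqI[OF pfsa_hom_image[OF G h]
        is_stationary_hom_image[OF G h is_stationary_stationary[OF G]]] .
  then have "process_prob S (h ` Q) d' p' x =
      (\<Sum>r\<in>h ` Q. \<Sum>q\<in>{q\<in>Q. h q = r}. ?v q * word_prob d' p' (h q) x)"
    unfolding process_prob_def by (intro sum.cong refl) (auto simp: sum_distrib_right)
  also have "\<dots> = (\<Sum>q\<in>Q. ?v q * word_prob d' p' (h q) x)"
    by (rule sum.group) (use pfsaD(3)[OF G] in auto)
  also have "\<dots> = process_prob S Q d p x"
    unfolding process_prob_def using pfsa_hom_future_equiv[OF G h] x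
    by (intro sum.cong) (auto simp: future_equiv_def)
  finally show "process_prob S Q d p x = process_prob S (h ` Q) d' p' x" ..
qed

lemma quotient_pfsa_hom:
  assumes G: "pfsa S Q d p"
    and h: "\<And>a b. a \<in> Q \<Longrightarrow> b \<in> Q \<Longrightarrow> h a = h b \<longleftrightarrow> equiv_states S d p a b"
  shows "pfsa_hom S Q d p (\<lambda>i s. h (d (inv_into Q h i) s)) (\<lambda>i s. p (inv_into Q h i) s) h"
  unfolding pfsa_hom_def
proof (intro ballI conjI impI)
  fix q s assume q: "q \<in> Q" and s: "s \<in> S"
  define q0 where "q0 = inv_into Q h (h q)"
  have q0: "q0 \<in> Q" "h q0 = h q" unfolding q0_def using q by (auto intro: inv_into_into f_inv_into_f)
  then have eq: "future_equiv S d p q d p q0"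
    using h[OF q0(1) q] h[OF q q0(1)] unfolding equiv_states_iff_future_equiv by simp
  show p_eq: "p q0 s = p q s" by (rule future_equiv_letter_prob[OF G G q q0(1) eq s])
  assume pos: "p q s > 0"
  have "d q s \<in> Q" "d q0 s \<in> Q" using pfsaD(7)[OF G] q q0(1) s pos p_eq by auto
  moreover have "equiv_states S d p (d q s) (d q0 s)"
    using future_equiv_step(2)[OF eq s pos] unfolding equiv_states_iff_future_equiv .
  ultimately show "h (d q s) = h (d q0 s)" using h by blast
qed

lemma exists_smaller_quotient:
  assumes G: "pfsa S Q d p" and q12: "q1 \<in> Q" "q2 \<in> Q" "q1 \<noteq> q2" "equiv_states S d p q1 q2"
  shows "\<exists>(Q' :: nat set) d' p'. pfsa S Q' d' p' \<and> card Q' < card Q \<and> same_process S Q d p Q' d' p'"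
proof -
  define cls where "cls q = {q'\<in>Q. equiv_states S d p q q'}" for q
  obtain enc :: "_ set \<Rightarrow> nat" where enc: "inj_on enc (cls ` Q)"
    using finite_imp_inj_to_nat_seg[of "cls ` Q"] pfsaD(3)[OF G] by auto
  define h where "h q = enc (cls q)" for q
  have h: "h a = h b \<longleftrightarrow> equiv_states S d p a b" if "a \<in> Q" "b \<in> Q" for a b
  proof -
    have "h a = h b \<longleftrightarrow> cls a = cls b"
      unfolding h_def using enc that by (auto dest: inj_onD)
    also have "\<dots> \<longleftrightarrow> equiv_states S d p a b"
    proof
      assume "cls a = cls b"
      moreover have "b \<in> cls b" using that unfolding cls_def equiv_states_def by simp
      ultimately show "equiv_states S d p a b" unfolding cls_def by blast
    next
      assume "equiv_states S d p a b"
      then show "cls a = cls b" unfolding cls_def equiv_states_def by auto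
    qed
    finally show ?thesis .
  qed
  note hom = quotient_pfsa_hom[OF G h]
  have "\<not> inj_on h Q" using h q12 unfolding inj_on_def by blast
  then have "card (h ` Q) < card Q"
    using card_image_le[OF pfsaD(3)[OF G], of h] inj_on_iff_eq_card[OF pfsaD(3)[OF G], of h] by linarith
  then show ?thesis
    using pfsa_hom_image[OF G hom] same_process_hom_image[OF G hom] by blast
qed

section \<open>Synchronisation\<close>

lemma weighted_variance_identity:
  fixes e :: "'w \<Rightarrow> 'q \<Rightarrow> real"
  assumes fA: "finite A" and fB: "finite B"
    and nonneg: "\<And>w q. w \<in> A \<Longrightarrow> q \<in> B \<Longrightarrow> e w q \<ge> 0"
    and a: "\<And>q. q \<in> B \<Longrightarrow> a q = (\<Sum>w\<in>A. e w q)"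
    and R: "\<And>w. w \<in> A \<Longrightarrow> R w = (\<Sum>q\<in>B. e w q)"
    and T: "T = (\<Sum>q\<in>B. a q)" "T > 0"
  shows "(\<Sum>w\<in>A. (\<Sum>q\<in>B. (e w q)\<^sup>2) / R w) - (\<Sum>q\<in>B. (a q)\<^sup>2) / T
       = (\<Sum>w\<in>A. R w * (\<Sum>q\<in>B. (e w q / R w - a q / T)\<^sup>2))"
proof -
  have expand: "R w * (e w q / R w - a q / T)\<^sup>2
      = (e w q)\<^sup>2 / R w - 2 * e w q * a q / T + R w * (a q)\<^sup>2 / T\<^sup>2"
    if w: "w \<in> A" and q: "q \<in> B" for w q
  proof (cases "R w = 0")
    case True
    then have "e w q = 0"
      using sum_nonneg_eq_0_iff[OF fB, of "e w"] nonneg w q R[OF w] by auto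
    then show ?thesis using True by simp
  next
    case False
    then show ?thesis using T(2) by (simp add: power2_eq_square field_simps)
  qed
  have cross: "(\<Sum>w\<in>A. \<Sum>q\<in>B. 2 * e w q * a q / T) = 2 * ((\<Sum>q\<in>B. (a q)\<^sup>2) / T)"
  proof -
    have "(\<Sum>w\<in>A. \<Sum>q\<in>B. 2 * e w q * a q / T) = (\<Sum>q\<in>B. (2 * a q / T) * (\<Sum>w\<in>A. e w q))"
      by (subst sum.swap) (simp add: sum_distrib_left sum_divide_distrib mult.commute mult.left_commute)
    also have "\<dots> = (\<Sum>q\<in>B. 2 * (a q)\<^sup>2 / T)"
      using a by (intro sum.cong) (simp_all add: power2_eq_square)
    finally show ?thesis by (simp add: sum_divide_distrib sum_distrib_left)
  qed
  have square: "(\<Sum>w\<in>A. \<Sum>q\<in>B. R w * (a q)\<^sup>2 / T\<^sup>2) = (\<Sum>q\<in>B. (a q)\<^sup>2) / T"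
  proof -
    have "(\<Sum>w\<in>A. R w) = T"
      using R T a by (simp add: sum.swap[of _ A B])
    have "(\<Sum>w\<in>A. \<Sum>q\<in>B. R w * (a q)\<^sup>2 / T\<^sup>2) = (\<Sum>w\<in>A. R w * ((\<Sum>q\<in>B. (a q)\<^sup>2) / T\<^sup>2))"
      by (simp add: sum_distrib_left sum_divide_distrib)
    also have "\<dots> = (\<Sum>w\<in>A. R w) * ((\<Sum>q\<in>B. (a q)\<^sup>2) / T\<^sup>2)"
      by (simp only: sum_distrib_right)
    also have "\<dots> = (\<Sum>q\<in>B. (a q)\<^sup>2) / T"
      using \<open>(\<Sum>w\<in>A. R w) = T\<close> T(2) by (simp add: power2_eq_square)
    finally show ?thesis .
  qed
  have "(\<Sum>w\<in>A. R w * (\<Sum>q\<in>B. (e w q / R w - a q / T)\<^sup>2))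
      = (\<Sum>w\<in>A. \<Sum>q\<in>B. (e w q)\<^sup>2 / R w - 2 * e w q * a q / T + R w * (a q)\<^sup>2 / T\<^sup>2)"
    by (simp add: sum_distrib_left expand)
  also have "\<dots> = (\<Sum>w\<in>A. \<Sum>q\<in>B. (e w q)\<^sup>2 / R w) - (\<Sum>w\<in>A. \<Sum>q\<in>B. 2 * e w q * a q / T)
                 + (\<Sum>w\<in>A. \<Sum>q\<in>B. R w * (a q)\<^sup>2 / T\<^sup>2)"
    by (simp add: sum.distrib sum_subtractf)
  also have "(\<Sum>w\<in>A. \<Sum>q\<in>B. (e w q)\<^sup>2 / R w) = (\<Sum>w\<in>A. (\<Sum>q\<in>B. (e w q)\<^sup>2) / R w)"
    by (simp add: sum_divide_distrib)
  finally show ?thesis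
    unfolding cross square by linarith
qed

lemma scaled_sq_deviation_le:
  fixes R T a m :: real
  assumes "0 \<le> R" "R \<le> T" "T > 0" "R = 0 \<Longrightarrow> m = 0"
  shows "(a\<^sup>2 / T) * (m - R / T)\<^sup>2 \<le> R * (a * m / R - a / T)\<^sup>2"
proof (cases "R = 0")
  case True
  then show ?thesis using assms by simp
next
  case False
  then have R: "R > 0" using assms by simp
  define K where "K = a\<^sup>2 * (m * T - R)\<^sup>2"
  have "(a\<^sup>2 / T) * (m - R / T)\<^sup>2 = K / T^3"
    unfolding K_def using assms(3) by (simp add: field_simps power2_eq_square power3_eq_cube)
  also have "\<dots> \<le> K / (R * T\<^sup>2)"
    using assms(2,3) R unfolding K_def
    by (intro divide_left_mono) (simp_all add: power2_eq_square power3_eq_cube mult_right_mono)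
  also have "\<dots> = R * (a * m / R - a / T)\<^sup>2"
    unfolding K_def using assms(3) R by (simp add: field_simps power2_eq_square)
  finally show ?thesis .
qed

lemma half_sq_diff_le:
  fixes u v c :: real
  shows "(u - v)\<^sup>2 / 2 \<le> (u - c)\<^sup>2 + (v - c)\<^sup>2"
proof -
  have "0 \<le> (u + v - 2 * c)\<^sup>2" by simp
  then show ?thesis by (simp add: power2_eq_square field_simps)
qed

lemma bounded_seq_small_increment:
  fixes f :: "nat \<Rightarrow> real"
  assumes "\<And>n. 0 \<le> f n" "\<And>n. f n \<le> B" and "\<epsilon> > 0"
  shows "\<exists>n. f (n + L) - f n < \<epsilon>"
proof (rule ccontr)
  assume no_small: "\<not> ?thesis"
  have step: "f n + \<epsilon> \<le> f (n + L)" for n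
  proof -
    have "\<not> f (n + L) - f n < \<epsilon>" using no_small by blast
    then show ?thesis by linarith
  qed
  have grow: "real k * \<epsilon> \<le> f (k * L)" for k
  proof (induction k)
    case 0
    then show ?case using assms(1) by simp
  next
    case (Suc k)
    then show ?case using step[of "k * L"] by (simp add: algebra_simps add.commute)
  qed
  obtain k :: nat where "real k > B / \<epsilon>" using reals_Archimedean2 by blast
  then have "real k * \<epsilon> > B" using assms(3) by (simp add: field_simps)
  then show False using grow[of k] assms(2)[of "k * L"] by simp
qed

lemma finite_positive_lower_bound:
  fixes f :: "'b \<Rightarrow> real"
  assumes "finite A" "\<forall>a\<in>A. 0 < f a"
  shows "\<exists>c>0. \<forall>a\<in>A. c \<le> f a"
proof (cases "A = {}")
  case True
  then show ?thesis by (intro exI[of _ 1]) auto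
next
  case False
  then have "Min (f ` A) \<in> f ` A" using assms by (intro Min_in) auto
  then show ?thesis using assms by (intro exI[of _ "Min (f ` A)"]) auto
qed

definition mixture_prob ::
  "'q set \<Rightarrow> ('q \<Rightarrow> 'a \<Rightarrow> 'q) \<Rightarrow> ('q \<Rightarrow> 'a \<Rightarrow> real) \<Rightarrow> ('q \<Rightarrow> real) \<Rightarrow> 'a list \<Rightarrow> real" where
  "mixture_prob Q d p v x = (\<Sum>q\<in>Q. v q * word_prob d p q x)"

lemma process_prob_eq_mixture_prob: "process_prob S Q d p x = mixture_prob Q d p (stationary S Q d p) x"
  unfolding process_prob_def mixture_prob_def ..

text \<open>Let \<open>P = mixture_prob Q d p v\<close> and let \<open>\<pi>\<^sub>q(x) = v q \<mu>\<^sub>q(x) / P(x)\<close> be the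
  posterior probability of the initial state \<open>q\<close> after observing \<open>x\<close>. Then
  \<open>word_energy x = P(x) \<Sum>\<^sub>q \<pi>\<^sub>q(x)\<^sup>2\<close> (and \<open>0\<close> if \<open>P(x) = 0\<close>), so \<open>energy n\<close> is the
  expected squared norm of the posterior after \<open>n\<close> letters. The posterior is a martingale,
  so the energy is nondecreasing, and \<open>energy_gain L x\<close> is its conditional variance over
  \<open>L\<close> further letters.\<close>

definition word_energy ::
  "'q set \<Rightarrow> ('q \<Rightarrow> 'a \<Rightarrow> 'q) \<Rightarrow> ('q \<Rightarrow> 'a \<Rightarrow> real) \<Rightarrow> ('q \<Rightarrow> real) \<Rightarrow> 'a list \<Rightarrow> real" where
  "word_energy Q d p v x = (\<Sum>q\<in>Q. (v q * word_prob d p q x)\<^sup>2) / mixture_prob Q d p v x"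

definition energy ::
  "'a set \<Rightarrow> 'q set \<Rightarrow> ('q \<Rightarrow> 'a \<Rightarrow> 'q) \<Rightarrow> ('q \<Rightarrow> 'a \<Rightarrow> real) \<Rightarrow> ('q \<Rightarrow> real) \<Rightarrow> nat \<Rightarrow> real" where
  "energy S Q d p v n = (\<Sum>x\<in>words S n. word_energy Q d p v x)"

definition energy_gain ::
  "'a set \<Rightarrow> 'q set \<Rightarrow> ('q \<Rightarrow> 'a \<Rightarrow> 'q) \<Rightarrow> ('q \<Rightarrow> 'a \<Rightarrow> real) \<Rightarrow> ('q \<Rightarrow> real) \<Rightarrow>
   nat \<Rightarrow> 'a list \<Rightarrow> real" where
  "energy_gain S Q d p v L x =
     (\<Sum>w\<in>words S L. word_energy Q d p v (x @ w)) - word_energy Q d p v x"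

locale initialized_pfsa =
  fixes S :: "'a set" and Q :: "'q set" and d :: "'q \<Rightarrow> 'a \<Rightarrow> 'q" and p :: "'q \<Rightarrow> 'a \<Rightarrow> real"
    and v :: "'q \<Rightarrow> real"
  assumes is_pfsa: "pfsa S Q d p"
    and init_nonneg: "q \<in> Q \<Longrightarrow> 0 \<le> v q"
    and init_sum: "sum v Q = 1"
begin

lemma finite_states: "finite Q"
  using pfsaD(3)[OF is_pfsa] .

lemma finite_alphabet: "finite S"
  using pfsaD(1)[OF is_pfsa] .

lemma weight_nonneg: "q \<in> Q \<Longrightarrow> 0 \<le> v q * word_prob d p q x"
  by (rule mult_nonneg_nonneg[OF init_nonneg word_prob_nonneg])

lemma mixture_prob_nonneg: "mixture_prob Q d p v x \<ge> 0"
  unfolding mixture_prob_def by (rule sum_nonneg) (use weight_nonneg in auto)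

lemma weight_le_mixture_prob: "q \<in> Q \<Longrightarrow> v q * word_prob d p q x \<le> mixture_prob Q d p v x"
  unfolding mixture_prob_def by (rule member_le_sum) (use weight_nonneg finite_states in auto)

lemma weight_eq_0_if_mixture_prob_eq_0:
  "mixture_prob Q d p v x = 0 \<Longrightarrow> q \<in> Q \<Longrightarrow> v q * word_prob d p q x = 0"
  using weight_le_mixture_prob weight_nonneg by (metis order_antisym)

lemma sum_mixture_prob_extensions:
  "x \<in> lists S \<Longrightarrow> (\<Sum>w\<in>words S L. mixture_prob Q d p v (x @ w)) = mixture_prob Q d p v x"
  unfolding mixture_prob_def
  by (subst sum.swap) (simp add: sum_distrib_left[symmetric] sum_word_prob_extensions[OF is_pfsa])

lemma sum_mixture_prob_words: "(\<Sum>x\<in>words S n. mixture_prob Q d p v x) = 1"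
  using sum_mixture_prob_extensions[of "[]" n] init_sum by (simp add: mixture_prob_def)

lemma mixture_prob_append_le:
  assumes "x \<in> lists S" "w \<in> words S L"
  shows "mixture_prob Q d p v (x @ w) \<le> mixture_prob Q d p v x"
proof -
  have "mixture_prob Q d p v (x @ w) \<le> (\<Sum>w\<in>words S L. mixture_prob Q d p v (x @ w))"
    by (rule member_le_sum) (use assms finite_words[OF finite_alphabet] mixture_prob_nonneg in auto)
  then show ?thesis using sum_mixture_prob_extensions[OF assms(1)] by simp
qed

lemma word_energy_nonneg: "0 \<le> word_energy Q d p v x"
  unfolding word_energy_def by (simp add: sum_nonneg mixture_prob_nonneg)

lemma word_energy_le_mixture_prob: "word_energy Q d p v x \<le> mixture_prob Q d p v x"
proof (cases "mixture_prob Q d p v x = 0")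
  case False
  have "(\<Sum>q\<in>Q. (v q * word_prob d p q x)\<^sup>2) \<le> (\<Sum>q\<in>Q. v q * word_prob d p q x * mixture_prob Q d p v x)"
    unfolding power2_eq_square
    by (rule sum_mono) (use weight_nonneg weight_le_mixture_prob in \<open>simp add: mult_left_mono\<close>)
  also have "\<dots> = mixture_prob Q d p v x * mixture_prob Q d p v x"
    by (simp add: mixture_prob_def sum_distrib_right)
  finally show ?thesis
    using False mixture_prob_nonneg[of x] unfolding word_energy_def by (simp add: divide_le_eq)
qed (simp add: word_energy_def)

lemma energy_nonneg: "0 \<le> energy S Q d p v n"
  unfolding energy_def by (rule sum_nonneg) (use word_energy_nonneg in auto)

lemma energy_le_1: "energy S Q d p v n \<le> 1"
proof -
  have "energy S Q d p v n \<le> (\<Sum>x\<in>words S n. mixture_prob Q d p v x)"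
    unfolding energy_def by (rule sum_mono) (use word_energy_le_mixture_prob in auto)
  then show ?thesis using sum_mixture_prob_words by simp
qed

lemma energy_add:
  "energy S Q d p v (n + L) - energy S Q d p v n = (\<Sum>x\<in>words S n. energy_gain S Q d p v L x)"
  unfolding energy_def energy_gain_def sum_words_add by (simp add: sum_subtractf)

lemma energy_gain_eq_0:
  assumes "mixture_prob Q d p v x = 0"
  shows "energy_gain S Q d p v L x = 0"
proof -
  have zero: "v q * word_prob d p q (x @ w) = 0" if "q \<in> Q" for q w
    using weight_eq_0_if_mixture_prob_eq_0[OF assms that] by (auto simp: word_prob_append)
  have "word_energy Q d p v (x @ w) = 0" for w
    unfolding word_energy_def by (simp add: zero)
  moreover have "word_energy Q d p v x = 0"
    unfolding word_energy_def using assms by simp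
  ultimately show ?thesis unfolding energy_gain_def by simp
qed

lemma energy_gain_eq_variance:
  assumes x: "x \<in> lists S" and pos: "mixture_prob Q d p v x > 0"
  shows "energy_gain S Q d p v L x = (\<Sum>w\<in>words S L. mixture_prob Q d p v (x @ w) *
     (\<Sum>q\<in>Q. (v q * word_prob d p q (x @ w) / mixture_prob Q d p v (x @ w)
              - v q * word_prob d p q x / mixture_prob Q d p v x)\<^sup>2))"
  unfolding energy_gain_def word_energy_def
proof (rule weighted_variance_identity[OF finite_words[OF finite_alphabet] finite_states])
  show "\<And>q. q \<in> Q \<Longrightarrow> v q * word_prob d p q x = (\<Sum>w\<in>words S L. v q * word_prob d p q (x @ w))"
    using sum_word_prob_extensions[OF is_pfsa _ x] by (simp add: sum_distrib_left[symmetric])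
qed (use weight_nonneg pos in \<open>simp_all add: mixture_prob_def\<close>)

lemma energy_gain_nonneg:
  assumes "x \<in> lists S"
  shows "0 \<le> energy_gain S Q d p v L x"
proof (cases "mixture_prob Q d p v x = 0")
  case True
  then show ?thesis using energy_gain_eq_0 by simp
next
  case False
  then have "mixture_prob Q d p v x > 0" using mixture_prob_nonneg[of x] by simp
  then show ?thesis unfolding energy_gain_eq_variance[OF assms \<open>mixture_prob Q d p v x > 0\<close>]
    by (intro sum_nonneg mult_nonneg_nonneg mixture_prob_nonneg) auto
qed

end

lemma word_prob_diff_abs_le_1:
  assumes G: "pfsa S Q d p" and "q \<in> Q" "q' \<in> Q" "w \<in> lists S"
  shows "\<bar>word_prob d p q w - word_prob d p q' w\<bar> \<le> 1"
proof -
  have "word_prob d p q w \<le> 1" "word_prob d p q' w \<le> 1"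
    using word_prob_le_1[OF G] assms(2-4) by auto
  then show ?thesis using word_prob_nonneg[of d p q w] word_prob_nonneg[of d p q' w] by linarith
qed

definition separates :: "'a set \<Rightarrow> 'q set \<Rightarrow> ('q \<Rightarrow> 'a \<Rightarrow> 'q) \<Rightarrow> ('q \<Rightarrow> 'a \<Rightarrow> real) \<Rightarrow> nat \<Rightarrow> real \<Rightarrow> bool" where
  "separates S Q d p L D \<longleftrightarrow>
     (\<forall>r1\<in>Q. \<forall>r2\<in>Q. \<not> equiv_states S d p r1 r2 \<longrightarrow>
        D \<le> (\<Sum>w\<in>words S L. (word_prob d p r1 w - word_prob d p r2 w)\<^sup>2))"

lemma differing_word_of_length:
  assumes G: "pfsa S Q d p" and r: "r1 \<in> Q" "r2 \<in> Q" and w0: "w0 \<in> lists S"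
    and differ: "word_prob d p r1 w0 \<noteq> word_prob d p r2 w0" and L: "length w0 \<le> L"
  shows "\<exists>w\<in>words S L. word_prob d p r1 w \<noteq> word_prob d p r2 w"
proof (rule ccontr)
  assume "\<not> ?thesis"
  then have eq: "\<forall>w\<in>words S L. word_prob d p r1 w = word_prob d p r2 w" by blast
  obtain k where k: "L = length w0 + k" using L le_Suc_ex by blast
  have "w0 @ u \<in> words S L" if "u \<in> words S k" for u using that w0 k unfolding words_def by auto
  then have "(\<Sum>u\<in>words S k. word_prob d p r1 (w0 @ u)) = (\<Sum>u\<in>words S k. word_prob d p r2 (w0 @ u))"
    using eq by (intro sum.cong) auto
  then show False
    using sum_word_prob_extensions[OF G r(1) w0] sum_word_prob_extensions[OF G r(2) w0] differ by simp
qed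

lemma eventually_separates:
  assumes G: "pfsa S Q d p"
  shows "\<exists>L0. \<forall>L\<ge>L0. \<exists>D>0. separates S Q d p L D"
proof -
  define N where "N = {(r1, r2) \<in> Q \<times> Q. \<not> equiv_states S d p r1 r2}"
  have fin: "finite N"
    by (rule finite_subset[of _ "Q \<times> Q"]) (use pfsaD(3)[OF G] in \<open>auto simp: N_def\<close>)
  have "\<forall>r\<in>N. \<exists>w. w \<in> lists S \<and> word_prob d p (fst r) w \<noteq> word_prob d p (snd r) w"
    unfolding N_def equiv_states_def by auto
  from bchoice[OF this] obtain wit where wit: "\<forall>r\<in>N.
      wit r \<in> lists S \<and> word_prob d p (fst r) (wit r) \<noteq> word_prob d p (snd r) (wit r)" ..
  define L0 where "L0 = (\<Sum>r\<in>N. length (wit r))"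
  have "\<exists>D>0. separates S Q d p L D" if L: "L0 \<le> L" for L
  proof -
    let ?dist = "\<lambda>r. \<Sum>w\<in>words S L. (word_prob d p (fst r) w - word_prob d p (snd r) w)\<^sup>2"
    have "\<forall>r\<in>N. 0 < ?dist r"
    proof
      fix r assume r: "r \<in> N"
      have "length (wit r) \<le> L0" unfolding L0_def by (rule member_le_sum) (use r fin in auto)
      moreover have "fst r \<in> Q" "snd r \<in> Q" using r unfolding N_def by auto
      moreover have "wit r \<in> lists S" "word_prob d p (fst r) (wit r) \<noteq> word_prob d p (snd r) (wit r)"
        using wit r by auto
      ultimately obtain w where w: "w \<in> words S L" "word_prob d p (fst r) w \<noteq> word_prob d p (snd r) w"
        using differing_word_of_length[OF G _ _ _ _ order_trans[OF _ L]] by blast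
      have "0 < (word_prob d p (fst r) w - word_prob d p (snd r) w)\<^sup>2" using w(2) by simp
      also have "\<dots> \<le> ?dist r"
        by (rule member_le_sum) (use w finite_words[OF pfsaD(1)[OF G]] in auto)
      finally show "0 < ?dist r" .
    qed
    from finite_positive_lower_bound[OF fin this]
    obtain D where "D > 0" "\<forall>r\<in>N. D \<le> ?dist r" by blast
    then show ?thesis unfolding separates_def N_def by auto
  qed
  then show ?thesis by blast
qed

lemma uniform_future_gap:
  assumes "finite Q" "finite Q'" and no_equiv: "\<forall>r\<in>Q. \<forall>r'\<in>Q'. \<not> future_equiv S d p r d' p' r'"
  shows "\<exists>\<gamma>>0. \<forall>r\<in>Q. \<forall>r'\<in>Q'. \<exists>w\<in>lists S. \<gamma> \<le> \<bar>word_prob d p r w - word_prob d' p' r' w\<bar>"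
proof -
  have "\<forall>r\<in>Q \<times> Q'. \<exists>w. w \<in> lists S \<and> word_prob d p (fst r) w \<noteq> word_prob d' p' (snd r) w"
  proof
    fix r assume "r \<in> Q \<times> Q'"
    then have "\<not> future_equiv S d p (fst r) d' p' (snd r)" using no_equiv by auto
    then show "\<exists>w. w \<in> lists S \<and> word_prob d p (fst r) w \<noteq> word_prob d' p' (snd r) w"
      unfolding future_equiv_def by auto
  qed
  from bchoice[OF this] obtain wit where wit: "\<forall>r\<in>Q \<times> Q'.
      wit r \<in> lists S \<and> word_prob d p (fst r) (wit r) \<noteq> word_prob d' p' (snd r) (wit r)" ..
  have "\<forall>r\<in>Q \<times> Q'. 0 < \<bar>word_prob d p (fst r) (wit r) - word_prob d' p' (snd r) (wit r)\<bar>"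
  proof
    fix r assume "r \<in> Q \<times> Q'"
    then show "0 < \<bar>word_prob d p (fst r) (wit r) - word_prob d' p' (snd r) (wit r)\<bar>"
      using bspec[OF wit] by simp
  qed
  from finite_positive_lower_bound[OF finite_cartesian_product[OF assms(1,2)] this]
  obtain \<gamma> where \<gamma>: "\<gamma> > 0"
    and gap: "\<forall>r\<in>Q \<times> Q'. \<gamma> \<le> \<bar>word_prob d p (fst r) (wit r) - word_prob d' p' (snd r) (wit r)\<bar>"
    by blast
  show ?thesis
  proof (intro exI[of _ \<gamma>] conjI ballI)
    fix r r' assume "r \<in> Q" "r' \<in> Q'"
    then have "(r, r') \<in> Q \<times> Q'" by simp
    then show "\<exists>w\<in>lists S. \<gamma> \<le> \<bar>word_prob d p r w - word_prob d' p' r' w\<bar>"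
      using bspec[OF wit] bspec[OF gap] by (intro bexI[of _ "wit (r, r')"]) auto
  qed (rule \<gamma>)
qed

text \<open>A state \<open>q\<close> is \<^emph>\<open>heavy\<close> after \<open>x\<close> if its posterior weight
  \<open>v q \<mu>\<^sub>q(x) / P(x)\<close> is at least \<open>\<theta>\<close>.\<close>

context initialized_pfsa
begin

lemma heavy_successor_in_states:
  assumes x: "x \<in> lists S" and q: "q \<in> Q" and pos: "0 < \<theta> * mixture_prob Q d p v x"
    and heavy: "\<theta> * mixture_prob Q d p v x \<le> v q * word_prob d p q x"
  shows "foldl d q x \<in> Q"
proof -
  have "0 < v q * word_prob d p q x" using pos heavy by linarith
  then have "word_prob d p q x > 0"
    using init_nonneg[OF q] word_prob_nonneg[of d p q x] by (simp add: zero_less_mult_iff)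
  then show ?thesis using foldl_in_states[OF is_pfsa q x] by simp
qed

lemma heavy_state_deviation_le:
  assumes x: "x \<in> lists S" and pos: "mixture_prob Q d p v x > 0" and w: "w \<in> words S L"
    and q: "q \<in> Q" and heavy: "\<theta> * mixture_prob Q d p v x \<le> v q * word_prob d p q x" and "\<theta> > 0"
  shows "\<theta>\<^sup>2 * mixture_prob Q d p v x *
           (word_prob d p (foldl d q x) w - mixture_prob Q d p v (x @ w) / mixture_prob Q d p v x)\<^sup>2
         \<le> mixture_prob Q d p v (x @ w) *
           (v q * word_prob d p q (x @ w) / mixture_prob Q d p v (x @ w)
            - v q * word_prob d p q x / mixture_prob Q d p v x)\<^sup>2"
proof -
  let ?T = "mixture_prob Q d p v x" and ?R = "mixture_prob Q d p v (x @ w)"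
  let ?a = "v q * word_prob d p q x" and ?m = "word_prob d p (foldl d q x) w"
  have a_pos: "?a > 0" using heavy pos \<open>\<theta> > 0\<close> mult_pos_pos[of \<theta> ?T] by linarith
  have split: "v q * word_prob d p q (x @ w) = ?a * ?m" by (simp add: word_prob_append mult.assoc)
  have "?m = 0" if "?R = 0"
  proof -
    have "v q * word_prob d p q (x @ w) = 0" by (rule weight_eq_0_if_mixture_prob_eq_0[OF that q])
    then have "?a * ?m = 0" unfolding split .
    then show "?m = 0" using a_pos by (metis less_irrefl mult_eq_0_iff)
  qed
  then have "(?a\<^sup>2 / ?T) * (?m - ?R / ?T)\<^sup>2 \<le> ?R * (?a * ?m / ?R - ?a / ?T)\<^sup>2"
    using mixture_prob_nonneg mixture_prob_append_le[OF x w] pos by (intro scaled_sq_deviation_le) auto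
  moreover have "\<theta>\<^sup>2 * ?T \<le> ?a\<^sup>2 / ?T"
  proof -
    have "(\<theta> * ?T)\<^sup>2 \<le> ?a\<^sup>2" using heavy \<open>\<theta> > 0\<close> pos by (intro power_mono) auto
    then show ?thesis using pos by (simp add: power2_eq_square field_simps)
  qed
  ultimately show ?thesis
    unfolding split by (meson mult_right_mono order_trans zero_le_power2)
qed

lemma energy_gain_ge:
  assumes x: "x \<in> lists S" and pos: "mixture_prob Q d p v x > 0"
    and q12: "q1 \<in> Q" "q2 \<in> Q" "q1 \<noteq> q2" and "\<theta> > 0"
    and heavy: "\<theta> * mixture_prob Q d p v x \<le> v q1 * word_prob d p q1 x"
      "\<theta> * mixture_prob Q d p v x \<le> v q2 * word_prob d p q2 x"
  shows "\<theta>\<^sup>2 * mixture_prob Q d p v x / 2 *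
           (\<Sum>w\<in>words S L. (word_prob d p (foldl d q1 x) w - word_prob d p (foldl d q2 x) w)\<^sup>2)
         \<le> energy_gain S Q d p v L x"
proof -
  let ?T = "mixture_prob Q d p v x" and ?R = "\<lambda>w. mixture_prob Q d p v (x @ w)"
  let ?m = "\<lambda>q w. word_prob d p (foldl d q x) w"
  let ?dev = "\<lambda>w q. (v q * word_prob d p q (x @ w) / ?R w - v q * word_prob d p q x / ?T)\<^sup>2"
  have "\<theta>\<^sup>2 * ?T / 2 * (\<Sum>w\<in>words S L. (?m q1 w - ?m q2 w)\<^sup>2)
      = (\<Sum>w\<in>words S L. \<theta>\<^sup>2 * ?T * ((?m q1 w - ?m q2 w)\<^sup>2 / 2))"
    by (simp add: sum_distrib_left)
  also have "\<dots> \<le> (\<Sum>w\<in>words S L. ?R w * (\<Sum>q\<in>Q. ?dev w q))"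
  proof (rule sum_mono)
    fix w assume w: "w \<in> words S L"
    have "\<theta>\<^sup>2 * ?T * ((?m q1 w - ?m q2 w)\<^sup>2 / 2)
        \<le> \<theta>\<^sup>2 * ?T * ((?m q1 w - ?R w / ?T)\<^sup>2 + (?m q2 w - ?R w / ?T)\<^sup>2)"
      using pos by (intro mult_left_mono half_sq_diff_le) auto
    also have "\<dots> \<le> ?R w * ?dev w q1 + ?R w * ?dev w q2"
      using heavy_state_deviation_le[OF x pos w q12(1) heavy(1) \<open>\<theta> > 0\<close>]
        heavy_state_deviation_le[OF x pos w q12(2) heavy(2) \<open>\<theta> > 0\<close>]
      by (simp add: distrib_left)
    also have "\<dots> = ?R w * (\<Sum>q\<in>{q1, q2}. ?dev w q)" using q12(3) by (simp add: distrib_left)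
    also have "\<dots> \<le> ?R w * (\<Sum>q\<in>Q. ?dev w q)"
      using q12 finite_states by (intro mult_left_mono sum_mono2 mixture_prob_nonneg) auto
    finally show "\<theta>\<^sup>2 * ?T * ((?m q1 w - ?m q2 w)\<^sup>2 / 2) \<le> ?R w * (\<Sum>q\<in>Q. ?dev w q)" .
  qed
  also have "\<dots> = energy_gain S Q d p v L x"
    by (rule energy_gain_eq_variance[OF x pos, symmetric])
  finally show ?thesis .
qed

lemma heavy_states_equiv_successors:
  assumes x: "x \<in> lists S" and pos: "mixture_prob Q d p v x > 0" and "\<theta> > 0"
    and sep: "separates S Q d p L D"
    and small: "energy_gain S Q d p v L x < \<theta>\<^sup>2 * D / 2 * mixture_prob Q d p v x"
    and q: "q1 \<in> Q" "q2 \<in> Q"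
    and heavy: "\<theta> * mixture_prob Q d p v x \<le> v q1 * word_prob d p q1 x"
      "\<theta> * mixture_prob Q d p v x \<le> v q2 * word_prob d p q2 x"
  shows "equiv_states S d p (foldl d q1 x) (foldl d q2 x)"
proof (rule ccontr)
  assume not_equiv: "\<not> ?thesis"
  then have "q1 \<noteq> q2" unfolding equiv_states_def by auto
  have "0 < \<theta> * mixture_prob Q d p v x" using pos \<open>\<theta> > 0\<close> by simp
  then have "foldl d q1 x \<in> Q" "foldl d q2 x \<in> Q"
    using heavy_successor_in_states[OF x] q heavy by auto
  then have "D \<le> (\<Sum>w\<in>words S L. (word_prob d p (foldl d q1 x) w - word_prob d p (foldl d q2 x) w)\<^sup>2)"
    using sep not_equiv unfolding separates_def by blast
  then have "\<theta>\<^sup>2 * mixture_prob Q d p v x / 2 * D \<le> \<theta>\<^sup>2 * mixture_prob Q d p v x / 2 *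
      (\<Sum>w\<in>words S L. (word_prob d p (foldl d q1 x) w - word_prob d p (foldl d q2 x) w)\<^sup>2)"
    using pos by (intro mult_left_mono) auto
  also have "\<dots> \<le> energy_gain S Q d p v L x"
    by (rule energy_gain_ge[OF x pos q \<open>q1 \<noteq> q2\<close> \<open>\<theta> > 0\<close> heavy])
  finally show False using small by (simp add: algebra_simps)
qed

lemma exists_heavy_state:
  assumes pos: "mixture_prob Q d p v x > 0" and small: "real (card Q) * \<theta> < 1"
  shows "\<exists>q\<in>Q. \<theta> * mixture_prob Q d p v x \<le> v q * word_prob d p q x"
proof (rule ccontr)
  assume "\<not> ?thesis"
  then have light: "\<And>q. q \<in> Q \<Longrightarrow> v q * word_prob d p q x < \<theta> * mixture_prob Q d p v x" by auto
  have "mixture_prob Q d p v x < (\<Sum>q\<in>Q. \<theta> * mixture_prob Q d p v x)"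
    unfolding mixture_prob_def[of Q d p v x]
    using finite_states pfsaD(4)[OF is_pfsa] light by (intro sum_strict_mono) (auto simp: mixture_prob_def)
  also have "\<dots> = (real (card Q) * \<theta>) * mixture_prob Q d p v x" by simp
  also have "\<dots> < 1 * mixture_prob Q d p v x" using mult_strict_right_mono[OF small pos] .
  finally show False by simp
qed

lemma mixture_prob_append_deviation:
  "mixture_prob Q d p v (x @ w) - mixture_prob Q d p v x * word_prob d p r w
     = (\<Sum>q\<in>Q. v q * word_prob d p q x * (word_prob d p (foldl d q x) w - word_prob d p r w))"
proof -
  have "mixture_prob Q d p v (x @ w) = (\<Sum>q\<in>Q. v q * word_prob d p q x * word_prob d p (foldl d q x) w)"
    by (simp add: mixture_prob_def word_prob_append mult.assoc)
  moreover have "mixture_prob Q d p v x * word_prob d p r w = (\<Sum>q\<in>Q. v q * word_prob d p q x * word_prob d p r w)"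
    by (simp add: mixture_prob_def sum_distrib_right)
  ultimately show ?thesis by (simp add: right_diff_distrib sum_subtractf)
qed

lemma weighted_successor_deviation_le:
  assumes x: "x \<in> lists S" and q: "q \<in> Q" and r: "r \<in> Q" and w: "w \<in> lists S"
  shows "\<bar>v q * word_prob d p q x * (word_prob d p (foldl d q x) w - word_prob d p r w)\<bar>
           \<le> v q * word_prob d p q x"
proof (cases "word_prob d p q x > 0")
  case True
  then have "foldl d q x \<in> Q" using foldl_in_states[OF is_pfsa q x] by simp
  then have "\<bar>word_prob d p (foldl d q x) w - word_prob d p r w\<bar> \<le> 1"
    using word_prob_diff_abs_le_1[OF is_pfsa _ r w] by blast
  then show ?thesis
    using weight_nonneg[OF q, of x]
    by (simp only: abs_mult[of "v q * word_prob d p q x"] abs_of_nonneg[OF weight_nonneg[OF q]] mult_left_le)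
next
  case False
  then have "word_prob d p q x = 0" using word_prob_nonneg[of d p q x] by simp
  then show ?thesis by simp
qed

lemma conditional_future_near_state:
  assumes x: "x \<in> lists S" and pos: "mixture_prob Q d p v x > 0" and "\<theta> > 0"
    and small_theta: "real (card Q) * \<theta> < 1" and sep: "separates S Q d p L D"
    and small: "energy_gain S Q d p v L x < \<theta>\<^sup>2 * D / 2 * mixture_prob Q d p v x"
  shows "\<exists>r\<in>Q. \<forall>w\<in>lists S. \<bar>mixture_prob Q d p v (x @ w) - mixture_prob Q d p v x * word_prob d p r w\<bar>
                              \<le> real (card Q) * \<theta> * mixture_prob Q d p v x"
proof -
  let ?T = "mixture_prob Q d p v x" and ?a = "\<lambda>q. v q * word_prob d p q x"
  obtain q1 where q1: "q1 \<in> Q" "\<theta> * ?T \<le> ?a q1" using exists_heavy_state[OF pos small_theta] by blast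
  define r where "r = foldl d q1 x"
  have "0 < \<theta> * ?T" using pos \<open>\<theta> > 0\<close> by simp
  then have r: "r \<in> Q" unfolding r_def using heavy_successor_in_states[OF x q1(1) _ q1(2)] by simp
  show ?thesis
  proof (intro bexI[OF _ r] ballI)
    fix w assume w: "w \<in> lists S"
    let ?dev = "\<lambda>q. ?a q * (word_prob d p (foldl d q x) w - word_prob d p r w)"
    have dev_le: "\<bar>?dev q\<bar> \<le> \<theta> * ?T" if q: "q \<in> Q" for q
    proof (cases "\<theta> * ?T \<le> ?a q")
      case True
      have "equiv_states S d p r (foldl d q x)"
        unfolding r_def by (rule heavy_states_equiv_successors[OF x pos \<open>\<theta> > 0\<close> sep small q1(1) q q1(2) True])
      then show ?thesis using w \<open>0 < \<theta> * ?T\<close> unfolding equiv_states_def by simp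
    next
      case False
      then show ?thesis using weighted_successor_deviation_le[OF x q r w] by simp
    qed
    have "\<bar>\<Sum>q\<in>Q. ?dev q\<bar> \<le> (\<Sum>q\<in>Q. \<bar>?dev q\<bar>)" by (rule sum_abs)
    also have "\<dots> \<le> (\<Sum>q\<in>Q. \<theta> * ?T)" by (rule sum_mono) (rule dev_le)
    also have "\<dots> = real (card Q) * \<theta> * ?T" by simp
    finally show "\<bar>mixture_prob Q d p v (x @ w) - ?T * word_prob d p r w\<bar> \<le> real (card Q) * \<theta> * ?T"
      unfolding mixture_prob_append_deviation .
  qed
qed

end

lemma exists_word_with_small_energy_gains:
  assumes M: "initialized_pfsa S Q d p v" and M': "initialized_pfsa S Q' d' p' v'"
    and same: "\<forall>x\<in>lists S. mixture_prob Q d p v x = mixture_prob Q' d' p' v' x" and "\<epsilon> > 0"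
  shows "\<exists>x\<in>lists S. 0 < mixture_prob Q d p v x \<and>
           energy_gain S Q d p v L x + energy_gain S Q' d' p' v' L x < \<epsilon> * mixture_prob Q d p v x"
proof -
  interpret A: initialized_pfsa S Q d p v by (rule M)
  interpret B: initialized_pfsa S Q' d' p' v' by (rule M')
  define f where "f n = energy S Q d p v n + energy S Q' d' p' v' n" for n
  have "0 \<le> f n" "f n \<le> 2" for n
    unfolding f_def
    using A.energy_nonneg[of n] A.energy_le_1[of n] B.energy_nonneg[of n] B.energy_le_1[of n] by linarith+
  then obtain n where n: "f (n + L) - f n < \<epsilon>"
    using bounded_seq_small_increment[of f 2 \<epsilon> L] \<open>\<epsilon> > 0\<close> by blast
  let ?gains = "\<lambda>x. energy_gain S Q d p v L x + energy_gain S Q' d' p' v' L x"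
  have increment: "f (n + L) - f n = (\<Sum>x\<in>words S n. ?gains x)"
    unfolding f_def using A.energy_add[of n L] B.energy_add[of n L] by (simp add: sum.distrib)
  have total: "\<epsilon> = (\<Sum>x\<in>words S n. \<epsilon> * mixture_prob Q d p v x)"
    using A.sum_mixture_prob_words[of n] by (simp add: sum_distrib_left[symmetric])
  have "\<exists>x\<in>words S n. ?gains x < \<epsilon> * mixture_prob Q d p v x"
  proof (rule ccontr)
    assume "\<not> ?thesis"
    then have "(\<Sum>x\<in>words S n. \<epsilon> * mixture_prob Q d p v x) \<le> (\<Sum>x\<in>words S n. ?gains x)"
      by (intro sum_mono) (simp add: not_less)
    then show False using n increment total by linarith
  qed
  then obtain x where x: "x \<in> words S n" and gains: "?gains x < \<epsilon> * mixture_prob Q d p v x" ..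
  then have x: "x \<in> lists S" unfolding words_def by simp
  have "mixture_prob Q d p v x \<noteq> 0"
  proof
    assume "mixture_prob Q d p v x = 0"
    moreover from this have "mixture_prob Q' d' p' v' x = 0" using same x by simp
    ultimately show False
      using gains A.energy_gain_eq_0 B.energy_gain_eq_0 by simp
  qed
  then have "0 < mixture_prob Q d p v x" using A.mixture_prob_nonneg[of x] by simp
  then show ?thesis using x gains by blast
qed

lemma exists_states_with_close_futures:
  assumes M: "initialized_pfsa S Q d p v" and M': "initialized_pfsa S Q' d' p' v'"
    and same: "\<forall>x\<in>lists S. mixture_prob Q d p v x = mixture_prob Q' d' p' v' x"
    and "\<theta> > 0" and small: "real (card Q) * \<theta> < 1" "real (card Q') * \<theta> < 1"
  shows "\<exists>r\<in>Q. \<exists>r'\<in>Q'. \<forall>w\<in>lists S.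
           \<bar>word_prob d p r w - word_prob d' p' r' w\<bar> \<le> (real (card Q) + real (card Q')) * \<theta>"
proof -
  interpret A: initialized_pfsa S Q d p v by (rule M)
  interpret B: initialized_pfsa S Q' d' p' v' by (rule M')
  let ?P = "mixture_prob Q d p v"
  obtain L0 L0' where L0: "\<forall>L\<ge>L0. \<exists>D>0. separates S Q d p L D"
    and L0': "\<forall>L\<ge>L0'. \<exists>D>0. separates S Q' d' p' L D"
    using eventually_separates[OF A.is_pfsa] eventually_separates[OF B.is_pfsa] by blast
  define L where "L = max L0 L0'"
  obtain D where D: "D > 0" "separates S Q d p L D" using L0 max.cobounded1 unfolding L_def by blast
  obtain D' where D': "D' > 0" "separates S Q' d' p' L D'" using L0' max.cobounded2 unfolding L_def by blast
  obtain x where x: "x \<in> lists S" "0 < ?P x"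
    and gains: "energy_gain S Q d p v L x + energy_gain S Q' d' p' v' L x
                < \<theta>\<^sup>2 * min D D' / 2 * ?P x"
    using exists_word_with_small_energy_gains[OF M M' same, of "\<theta>\<^sup>2 * min D D' / 2"] D D' \<open>\<theta> > 0\<close>
    by auto
  have same_x: "mixture_prob Q' d' p' v' (x @ w) = ?P (x @ w)" if "w \<in> lists S" for w
    using same x that by simp
  then have same_x0: "mixture_prob Q' d' p' v' x = ?P x" using same_x[of "[]"] by simp
  have "\<theta>\<^sup>2 * min D D' / 2 * ?P x \<le> \<theta>\<^sup>2 * D / 2 * ?P x"
    "\<theta>\<^sup>2 * min D D' / 2 * ?P x \<le> \<theta>\<^sup>2 * D' / 2 * ?P x"
    using x(2) by (simp_all add: mult_right_mono mult_left_mono)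
  then have gain: "energy_gain S Q d p v L x < \<theta>\<^sup>2 * D / 2 * ?P x"
    and gain': "energy_gain S Q' d' p' v' L x < \<theta>\<^sup>2 * D' / 2 * ?P x"
    using gains A.energy_gain_nonneg[OF x(1), of L] B.energy_gain_nonneg[OF x(1), of L] by linarith+
  obtain r where r: "r \<in> Q"
    and near: "\<forall>w\<in>lists S. \<bar>?P (x @ w) - ?P x * word_prob d p r w\<bar> \<le> real (card Q) * \<theta> * ?P x"
    using A.conditional_future_near_state[OF x \<open>\<theta> > 0\<close> small(1) D(2) gain] by blast
  have "0 < mixture_prob Q' d' p' v' x" using x(2) same_x0 by simp
  from B.conditional_future_near_state[OF x(1) this \<open>\<theta> > 0\<close> small(2) D'(2) gain'[folded same_x0]]
  obtain r' where r': "r' \<in> Q'"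
    and near': "\<forall>w\<in>lists S. \<bar>?P (x @ w) - ?P x * word_prob d' p' r' w\<bar> \<le> real (card Q') * \<theta> * ?P x"
    using same_x same_x0 by auto
  have "\<bar>word_prob d p r w - word_prob d' p' r' w\<bar> \<le> (real (card Q) + real (card Q')) * \<theta>"
    if w: "w \<in> lists S" for w
  proof -
    have "?P x * \<bar>word_prob d p r w - word_prob d' p' r' w\<bar>
        = \<bar>(?P (x @ w) - ?P x * word_prob d' p' r' w) - (?P (x @ w) - ?P x * word_prob d p r w)\<bar>"
      using x(2) by (simp add: abs_mult right_diff_distrib[symmetric])
    also have "\<dots> \<le> real (card Q') * \<theta> * ?P x + real (card Q) * \<theta> * ?P x"
      by (rule order_trans[OF abs_triangle_ineq4 add_mono]) (use near w near' in auto)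
    also have "\<dots> = ?P x * ((real (card Q) + real (card Q')) * \<theta>)" by (simp add: algebra_simps)
    finally show ?thesis using x(2) by simp
  qed
  then show ?thesis using r r' by blast
qed

text \<open>If no two states had the same future, a uniform gap \<open>\<gamma>\<close> would separate all pairs,
  contradicting \<open>exists_states_with_close_futures\<close> once \<open>(card Q + card Q') \<theta> < \<gamma>\<close>.\<close>

lemma exists_future_equiv_states:
  assumes M: "initialized_pfsa S Q d p v" and M': "initialized_pfsa S Q' d' p' v'"
    and same: "\<forall>x\<in>lists S. mixture_prob Q d p v x = mixture_prob Q' d' p' v' x"
  shows "\<exists>r\<in>Q. \<exists>r'\<in>Q'. future_equiv S d p r d' p' r'"
proof (rule ccontr)
  assume "\<not> ?thesis"
  then have "\<forall>r\<in>Q. \<forall>r'\<in>Q'. \<not> future_equiv S d p r d' p' r'" by simp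
  from uniform_future_gap[OF initialized_pfsa.finite_states[OF M]
      initialized_pfsa.finite_states[OF M'] this]
  obtain \<gamma> where "\<gamma> > 0"
    and gap: "\<forall>r\<in>Q. \<forall>r'\<in>Q'. \<exists>w\<in>lists S. \<gamma> \<le> \<bar>word_prob d p r w - word_prob d' p' r' w\<bar>"
    by blast
  define N where "N = real (card Q) + real (card Q')"
  define \<theta> where "\<theta> = min \<gamma> 1 / (N + 1)"
  have "N \<ge> 0" unfolding N_def by simp
  then have "\<theta> > 0" and "(N + 1) * \<theta> = min \<gamma> 1" unfolding \<theta>_def using \<open>\<gamma> > 0\<close> by simp_all
  then have N_\<theta>: "N * \<theta> < min \<gamma> 1" by (simp only: distrib_right)
  have "real (card Q) * \<theta> \<le> N * \<theta>" "real (card Q') * \<theta> \<le> N * \<theta>"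
    unfolding N_def using \<open>\<theta> > 0\<close> by (simp_all add: distrib_right)
  then have "real (card Q) * \<theta> < 1" "real (card Q') * \<theta> < 1" using N_\<theta> by linarith+
  from exists_states_with_close_futures[OF M M' same \<open>\<theta> > 0\<close> this]
  obtain r r' where "r \<in> Q" "r' \<in> Q'"
    and close: "\<forall>w\<in>lists S. \<bar>word_prob d p r w - word_prob d' p' r' w\<bar> \<le> N * \<theta>"
    unfolding N_def by blast
  then obtain w where "w \<in> lists S" "\<gamma> \<le> \<bar>word_prob d p r w - word_prob d' p' r' w\<bar>"
    using gap by blast
  moreover from this(1) have "\<bar>word_prob d p r w - word_prob d' p' r' w\<bar> \<le> N * \<theta>" using close by blast
  ultimately show False using N_\<theta> min.cobounded1[of \<gamma> 1] by linarith
qed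

lemma initialized_pfsa_stationary:
  assumes "pfsa S Q d p"
  shows "initialized_pfsa S Q d p (stationary S Q d p)"
  using assms is_stationary_stationary[OF assms] unfolding initialized_pfsa_def is_stationary_def by auto

lemma same_process_matching_state:
  assumes G: "pfsa S Q d p" and G': "pfsa S Q' d' p'"
    and same: "same_process S Q d p Q' d' p'" and q: "q \<in> Q"
  shows "\<exists>q'\<in>Q'. future_equiv S d p q d' p' q'"
proof -
  have "\<forall>x\<in>lists S. mixture_prob Q d p (stationary S Q d p) x = mixture_prob Q' d' p' (stationary S Q' d' p') x"
    using same unfolding same_process_def process_prob_eq_mixture_prob .
  from exists_future_equiv_states[OF initialized_pfsa_stationary[OF G] initialized_pfsa_stationary[OF G'] this]
  obtain r r' where r: "r \<in> Q" "r' \<in> Q'" and rr': "future_equiv S d p r d' p' r'" by blast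
  show ?thesis
    using pfsaD(8)[OF G r(1) q]
  proof (induction rule: rtrancl_induct)
    case base
    then show ?case using r rr' by blast
  next
    case (step y z)
    from step.hyps(2) obtain s where s: "y \<in> Q" "s \<in> S" "p y s > 0" "z = d y s"
      by (rule pfsa_edgesE)
    from step.IH obtain y' where y': "y' \<in> Q'" "future_equiv S d p y d' p' y'" by blast
    have "p' y' s > 0" using future_equiv_step(1)[OF y'(2) s(2,3)] s(3) by simp
    then have "d' y' s \<in> Q'" using pfsaD(7)[OF G' y'(1) s(2)] by simp
    moreover have "future_equiv S d p z d' p' (d' y' s)"
      using future_equiv_step(2)[OF y'(2) s(2,3)] s(4) by simp
    ultimately show ?case by blast
  qed
qed

lemma future_equiv_sym: "future_equiv S d p q d' p' q' \<Longrightarrow> future_equiv S d' p' q' d p q"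
  unfolding future_equiv_def by simp

lemma future_equiv_imp_equiv_states:
  "future_equiv S d p q d' p' q1 \<Longrightarrow> future_equiv S d p q d' p' q2 \<Longrightarrow> equiv_states S d' p' q1 q2"
  unfolding future_equiv_def equiv_states_def by simp

lemma exists_injective_matching:
  assumes G: "pfsa S Q d p" and G': "pfsa S Q' d' p'" and same: "same_process S Q d p Q' d' p'"
    and distinct: "\<forall>q\<in>Q. \<forall>q'\<in>Q. equiv_states S d p q q' \<longrightarrow> q = q'"
  shows "\<exists>f. inj_on f Q \<and> (\<forall>q\<in>Q. f q \<in> Q' \<and> future_equiv S d p q d' p' (f q))"
proof -
  have "\<forall>q\<in>Q. \<exists>q'. q' \<in> Q' \<and> future_equiv S d p q d' p' q'"
    using same_process_matching_state[OF G G' same] by blast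
  from bchoice[OF this] obtain f where f: "\<forall>q\<in>Q. f q \<in> Q' \<and> future_equiv S d p q d' p' (f q)" ..
  have "inj_on f Q"
  proof (rule inj_onI)
    fix a b assume a: "a \<in> Q" and b: "b \<in> Q" and "f a = f b"
    then have "future_equiv S d' p' (f a) d p a" "future_equiv S d' p' (f a) d p b"
      using f future_equiv_sym by metis+
    then have "equiv_states S d p a b" by (rule future_equiv_imp_equiv_states)
    then show "a = b" using distinct a b by blast
  qed
  then show ?thesis using f by blast
qed

section \<open>Irreducibility\<close>

theorem irreducible_iff_no_equiv_states:
  assumes G: "pfsa S Q d p"
  shows "irreducible_pfsa S Q d p \<longleftrightarrow> (\<forall>q\<in>Q. \<forall>q'\<in>Q. equiv_states S d p q q' \<longrightarrow> q = q')"
proof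
  assume irr: "irreducible_pfsa S Q d p"
  show "\<forall>q\<in>Q. \<forall>q'\<in>Q. equiv_states S d p q q' \<longrightarrow> q = q'"
  proof (intro ballI impI)
    fix q q' assume q: "q \<in> Q" "q' \<in> Q" and eq: "equiv_states S d p q q'"
    show "q = q'"
    proof (rule ccontr)
      assume "q \<noteq> q'"
      from exists_smaller_quotient[OF G q this eq] irr show False
        unfolding irreducible_pfsa_def by simp
    qed
  qed
next
  assume distinct: "\<forall>q\<in>Q. \<forall>q'\<in>Q. equiv_states S d p q q' \<longrightarrow> q = q'"
  show "irreducible_pfsa S Q d p"
    unfolding irreducible_pfsa_def
  proof
    assume "\<exists>(Q' :: nat set) d' p'. pfsa S Q' d' p' \<and> card Q' < card Q \<and> same_process S Q d p Q' d' p'"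
    then obtain Q' :: "nat set" and d' p' where G': "pfsa S Q' d' p'" and smaller: "card Q' < card Q"
      and same: "same_process S Q d p Q' d' p'" by blast
    obtain f where "inj_on f Q" "\<forall>q\<in>Q. f q \<in> Q'"
      using exists_injective_matching[OF G G' same distinct] by blast
    then have "f ` Q \<subseteq> Q'" by blast
    then have "card Q \<le> card Q'" using card_inj_on_le[OF \<open>inj_on f Q\<close> _ pfsaD(3)[OF G']] by blast
    then show False using smaller by simp
  qed
qed

lemma future_equiv_unique:
  assumes distinct: "\<forall>q\<in>Q'. \<forall>q'\<in>Q'. equiv_states S d' p' q q' \<longrightarrow> q = q'"
    and "a \<in> Q'" "future_equiv S d p q d' p' a" "b \<in> Q'" "future_equiv S d p q d' p' b"
  shows "a = b"
proof -
  have "equiv_states S d' p' a b" using assms(3,5) by (rule future_equiv_imp_equiv_states)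
  then show "a = b" using distinct assms(2,4) by blast
qed

lemma matching_is_pfsa_hom:
  assumes G: "pfsa S Q d p" and G': "pfsa S Q' d' p'"
    and distinct: "\<forall>q\<in>Q'. \<forall>q'\<in>Q'. equiv_states S d' p' q q' \<longrightarrow> q = q'"
    and f: "\<forall>q\<in>Q. f q \<in> Q' \<and> future_equiv S d p q d' p' (f q)"
  shows "pfsa_hom S Q d p d' p' f"
  unfolding pfsa_hom_def
proof (intro ballI conjI impI)
  fix q s assume q: "q \<in> Q" and s: "s \<in> S"
  have fq: "f q \<in> Q'" "future_equiv S d p q d' p' (f q)" using f q by auto
  show "p' (f q) s = p q s" by (rule future_equiv_letter_prob[OF G G' q fq s])
  assume pos: "p q s > 0"
  have "d q s \<in> Q" using pfsaD(7)[OF G q s pos] .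
  then have "f (d q s) \<in> Q'" "future_equiv S d p (d q s) d' p' (f (d q s))" using f by auto
  moreover have "p' (f q) s > 0" using future_equiv_step(1)[OF fq(2) s pos] pos by simp
  then have "d' (f q) s \<in> Q'" using pfsaD(7)[OF G' fq(1) s] by simp
  moreover have "future_equiv S d p (d q s) d' p' (d' (f q) s)"
    by (rule future_equiv_step(2)[OF fq(2) s pos])
  ultimately show "f (d q s) = d' (f q) s" by (rule future_equiv_unique[OF distinct])
qed

theorem irreducible_same_process_isomorphic:
  assumes G1: "pfsa S Q1 d1 p1" and G2: "pfsa S Q2 d2 p2"
    and irr1: "irreducible_pfsa S Q1 d1 p1" and irr2: "irreducible_pfsa S Q2 d2 p2"
    and same: "same_process S Q1 d1 p1 Q2 d2 p2"
  shows "\<exists>f. bij_betw f Q1 Q2 \<and> pfsa_hom S Q1 d1 p1 d2 p2 f"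
proof -
  have distinct1: "\<forall>q\<in>Q1. \<forall>q'\<in>Q1. equiv_states S d1 p1 q q' \<longrightarrow> q = q'"
    using irreducible_iff_no_equiv_states[OF G1] irr1 by simp
  have distinct2: "\<forall>q\<in>Q2. \<forall>q'\<in>Q2. equiv_states S d2 p2 q q' \<longrightarrow> q = q'"
    using irreducible_iff_no_equiv_states[OF G2] irr2 by simp
  have same': "same_process S Q2 d2 p2 Q1 d1 p1"
    using same unfolding same_process_def by simp
  obtain f where f: "inj_on f Q1" "\<forall>q\<in>Q1. f q \<in> Q2 \<and> future_equiv S d1 p1 q d2 p2 (f q)"
    using exists_injective_matching[OF G1 G2 same distinct1] by blast
  obtain g where g: "\<forall>q\<in>Q2. g q \<in> Q1 \<and> future_equiv S d2 p2 q d1 p1 (g q)"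
    using exists_injective_matching[OF G2 G1 same' distinct2] by blast
  have "Q2 \<subseteq> f ` Q1"
  proof
    fix q assume q: "q \<in> Q2"
    then have gq: "g q \<in> Q1" using g by blast
    have fgq: "f (g q) \<in> Q2" "future_equiv S d1 p1 (g q) d2 p2 (f (g q))" using f(2) gq by auto
    have "future_equiv S d1 p1 (g q) d2 p2 q" using g q by (simp add: future_equiv_sym)
    with fgq q have "f (g q) = q" by (intro future_equiv_unique[OF distinct2])
    then show "q \<in> f ` Q1" using gq by (metis image_eqI)
  qed
  then have "bij_betw f Q1 Q2" using f unfolding bij_betw_def by blast
  then show ?thesis using matching_is_pfsa_hom[OF G1 G2 distinct2 f(2)] by blast
qed

theorem mainTheorem6:
  fixes S :: "'a set"
  shows
   "(\<forall>(Q :: 'q set) d p. pfsa S Q d p \<longrightarrow>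
       (irreducible_pfsa S Q d p \<longleftrightarrow>
        (\<forall>q\<in>Q. \<forall>q'\<in>Q. equiv_states S d p q q' \<longrightarrow> q = q'))) \<and>
    (\<forall>(Q1 :: 'q set) d1 p1 (Q2 :: 'r set) d2 p2.
       pfsa S Q1 d1 p1 \<and> pfsa S Q2 d2 p2 \<and>
       irreducible_pfsa S Q1 d1 p1 \<and> irreducible_pfsa S Q2 d2 p2 \<and>
       same_process S Q1 d1 p1 Q2 d2 p2 \<longrightarrow>
       (\<exists>f. bij_betw f Q1 Q2 \<and>
          (\<forall>q\<in>Q1. \<forall>s\<in>S. p2 (f q) s = p1 q s \<and>
                (p1 q s > 0 \<longrightarrow> f (d1 q s) = d2 (f q) s))))"
proof (intro conjI allI impI)
  fix Q :: "'q set" and d p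
  assume "pfsa S Q d p"
  then show "irreducible_pfsa S Q d p \<longleftrightarrow> (\<forall>q\<in>Q. \<forall>q'\<in>Q. equiv_states S d p q q' \<longrightarrow> q = q')"
    by (rule irreducible_iff_no_equiv_states)
next
  fix Q1 :: "'q set" and d1 p1 and Q2 :: "'r set" and d2 p2
  assume "pfsa S Q1 d1 p1 \<and> pfsa S Q2 d2 p2 \<and>
       irreducible_pfsa S Q1 d1 p1 \<and> irreducible_pfsa S Q2 d2 p2 \<and>
       same_process S Q1 d1 p1 Q2 d2 p2"
  then have "\<exists>f. bij_betw f Q1 Q2 \<and> pfsa_hom S Q1 d1 p1 d2 p2 f"
    using irreducible_same_process_isomorphic by blast
  then show "\<exists>f. bij_betw f Q1 Q2 \<and>
      (\<forall>q\<in>Q1. \<forall>s\<in>S. p2 (f q) s = p1 q s \<and> (p1 q s > 0 \<longrightarrow> f (d1 q s) = d2 (f q) s))"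
    unfolding pfsa_hom_def .
qed
end
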